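(* In the aggregative setting described in the context (all listed assumptions hold), run the distributed VS-PGR algorithm with step size $\alpha>0$, $\tau_k=k+1$ and $S_k=\lceil\alpha^{-2}\rho^{-(k+1)}\rceil$ for some $\rho\in(0,1)$. Set $\gamma\triangleq\max\{\rho,\beta\}$, $\tilde L_\phi\triangleq\sqrt{1/2+(1+2\alpha^2)\bar\nu_1^2+2L_\phi^2}$, $\varrho_\phi\triangleq1-2\alpha\eta_\phi+2\alpha^2\tilde L_\phi^2$, $\bar\nu^2\triangleq(1+2\alpha^2)(2\bar\nu_1^2\|x^*\|^2+\bar\nu_2^2)$ with $\bar\nu_1\triangleq\max_i\nu_{i,1}$ and $\bar\nu_2^2\triangleq\sum_i\nu_{i,2}^2$, $D_{\mathcal{R}}\triangleq\sum_{j=1}^n\max_{x_j\in\mathcal{R}_j}\|x_j\|$, $C_1\triangleq\theta D_{\mathcal{R}}$, $C_2\triangleq2\theta D_{\mathcal{R}}\Big(e\sqrt{1/\ln(\beta^{-1/2})}+\frac{2+\ln(1/\beta)}{\beta^{1/2}\ln(1/\beta)}\Big)$. Then for every $k\ge0$, $$\mathbb{E}[\|x_{k+1}-x^*\|^2]\le\varrho_\phi\,\mathbb{E}[\|x_k-x^*\|^2]+C_3\gamma^{k+1},$$ where $C_3\triangleq\alpha^2\bar\nu^2+4\alpha nD_{\mathcal{R}}(C_1+C_2)\sum_{i=1}^nL_i+4\alpha^2n^2\beta(C_1^2+C_2^2)\sum_{i=1}^nL_i^2$.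
   Context: Aggregative game: $n$ players, each chooses $x_i\in\mathbb{R}^d$ (common $d$); $x=(x_1,\dots,x_n)$, $\bar x=\sum_jx_j$, $\bar x_{-i}=\sum_{j\ne i}x_j$. Player $i$ solves $\min_{x_i}f_i(x_i,\bar x)+r_i(x_i)$, where $f_i(x_i,\bar x)=\mathbb{E}[\psi_i(x_i,x_i+\bar x_{-i};\xi_i)]$, $\xi_i$ a random vector in $\mathbb{R}^{m_i}$. Assumptions: (a) each $r_i$ is lower semicontinuous and convex with compact effective domain $\mathcal{R}_i$; (b) for any $x_{-i}\in\prod_{j\ne i}\mathcal{R}_j$, $x_i\mapsto f_i(x_i,x_i+\bar x_{-i})$ is continuously differentiable and convex on $\mathcal{R}_i$; (c) for any such $x_{-i}$ and any $\xi_i$, $\psi_i(x_i,x_i+\bar x_{-i};\xi_i)$ is differentiable in $x_i\in\mathcal{R}_i$. Let $\mathcal{R}=\prod_i\mathcal{R}_i$. For $x\in\mathcal{R}$ let $\phi_i(x)$ be the gradient at $x_i$ of $x_i\mapsto f_i(x_i,x_i+\bar x_{-i})$ and $\phi(x)=(\phi_i(x))_i$. Each player has a map $F_i:\mathcal{R}_i\times\mathbb{R}^d\to\mathbb{R}^d$ with $F_i(x_i,\sum_jx_j)=\phi_i(x)$ for all $x\in\mathcal{R}$; $\nabla_{x_i}\psi_i(x_i,z;\xi_i)$ denotes the sampled gradient estimating $F_i(x_i,z)$. $x^*$ denotes the Nash equilibrium (each $x_i^*$ minimizes player $i$'s objective given $x_{-i}^*$). $\mathrm{prox}_{\alpha r_i}(z)=\arg\min_y(r_i(y)+\frac1{2\alpha}\|y-z\|^2)$.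 Network: undirected graph on $\{1,\dots,n\}$ with neighbour sets $\mathcal{N}_i\ni i$, matrix $A=[a_{ij}]$ with $a_{ij}>0$ if $j\in\mathcal{N}_i$ and $a_{ij}=0$ otherwise. The graph is connected and $A$ is symmetric with row sums one. Then there exist $\theta>0$, $\beta\in(0,1)$ with $|[A^k]_{ij}-1/n|\le\theta\beta^k$ for all $i,j$ and $k\ge1$; fix such $\theta,\beta$. Distributed VS-PGR algorithm: deterministic positive integers $\tau_k,S_k$; $v_{i,0}=x_{i,0}\in\mathcal{R}_i$. At iteration $k$: set $\hat v_{i,k}:=v_{i,k}$ and repeat $\tau_k$ times $\hat v_{i,k}:=\sum_{j\in\mathcal{N}_i}a_{ij}\hat v_{j,k}$ for all $i$; then $x_{i,k+1}=\mathrm{prox}_{\alpha r_i}\big[x_{i,k}-\frac{\alpha}{S_k}\sum_{p=1}^{S_k}\nabla_{x_i}\psi_i(x_{i,k},n\hat v_{i,k};\xi_{i,k}^p)\big]$ with i.i.d. realizations $\xi_{i,k}^p$ of $\xi_i$, and $v_{i,k+1}=\hat v_{i,k}+x_{i,k+1}-x_{i,k}$. Let $e_{i,k}=\frac1{S_k}\sum_p\nabla_{x_i}\psi_i(x_{i,k},n\hat v_{i,k};\xi_{i,k}^p)-F_i(x_{i,k},n\hat v_{i,k})$ and $\mathcal{F}_k=\sigma\{x_0,\dots,x_k\}$. Further assumptions: (ii) $(\phi(x)-\phi(y))^T(x-y)\ge\eta_\phi\|x-y\|^2$ for $x,y\in\mathcal{R}$; (iii) $\|\phi(x)-\phi(y)\|\le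 L_\phi\|x-y\|$ on $\mathcal{R}$; (iv) for each $i$ and $x_i\in\mathcal{R}_i$, $F_i(x_i,\cdot)$ is Lipschitz on bounded sets: for every $c_z>0$ there is $L_i$ (possibly depending on $c_z$) with $\|F_i(x_i,z_1)-F_i(x_i,z_2)\|\le L_i\|z_1-z_2\|$ whenever $\|z_1\|,\|z_2\|\le c_z$; here $L_i$ is such a constant for a bound $c_z$ covering the vectors $n\hat v_{i,k}$ and $\sum_jx_{j,k}$ generated by the algorithm; (v) there are $\nu_{i,1},\nu_{i,2}>0$ with $\mathbb{E}[\|e_{i,k}\|^2\mid\mathcal{F}_k]\le(\nu_{i,1}^2\|x_{i,k}\|^2+\nu_{i,2}^2)/S_k$ a.s. for all $k$. *)

theory Defs
  imports "HOL-Analysis.Analysis" "HOL-Probability.Probability"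
begin

definition lsc_fun :: "('a::topological_space \<Rightarrow> ereal) \<Rightarrow> bool" where
  "lsc_fun f \<longleftrightarrow> (\<forall>c. closed {x. f x \<le> c})"

definition econvex :: "('a::real_vector \<Rightarrow> ereal) \<Rightarrow> bool" where
  "econvex f \<longleftrightarrow> (\<forall>x y t. 0 < t \<and> t < 1 \<longrightarrow>
      f ((1 - t) *\<^sub>R x + t *\<^sub>R y) \<le> ereal (1 - t) * f x + ereal t * f y)"

definition edom :: "('a \<Rightarrow> ereal) \<Rightarrow> 'a set" where
  "edom f = {x. f x < \<infinity>}"

definition prox :: "real \<Rightarrow> ('a::real_normed_vector \<Rightarrow> ereal) \<Rightarrow> 'a \<Rightarrow> 'a" where
  "prox \<alpha> f z = (SOME y. \<forall>w. f y + ereal (norm (y - z)^2 / (2 * \<alpha>))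
                                 \<le> f w + ereal (norm (w - z)^2 / (2 * \<alpha>)))"

fun matpow :: "('n::finite \<Rightarrow> 'n \<Rightarrow> real) \<Rightarrow> nat \<Rightarrow> 'n \<Rightarrow> 'n \<Rightarrow> real" where
  "matpow A 0 = (\<lambda>i j. if i = j then 1 else 0)"
| "matpow A (Suc k) = (\<lambda>i j. \<Sum>l\<in>UNIV. matpow A k i l * A l j)"

text \<open>One consensus step: vhat_i := sum_{j in N_i} a_ij vhat_j (a_ij = 0 off the neighbour set).\<close>
definition mix :: "('n::finite \<Rightarrow> 'n \<Rightarrow> real) \<Rightarrow> ('n \<Rightarrow> 'a::real_vector) \<Rightarrow> 'n \<Rightarrow> 'a" where
  "mix A v = (\<lambda>i. \<Sum>j\<in>UNIV. A i j *\<^sub>R v j)"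

definition sq_dist :: "('n::finite \<Rightarrow> 'a::real_normed_vector) \<Rightarrow> ('n \<Rightarrow> 'a) \<Rightarrow> real" where
  "sq_dist x y = (\<Sum>i\<in>UNIV. norm (x i - y i)^2)"

definition sq_norm :: "('n::finite \<Rightarrow> 'a::real_normed_vector) \<Rightarrow> real" where
  "sq_norm x = (\<Sum>i\<in>UNIV. norm (x i)^2)"

definition others :: "('n::finite \<Rightarrow> 'a::real_vector) \<Rightarrow> 'n \<Rightarrow> 'a" where
  "others x i = (\<Sum>j\<in>UNIV - {i}. x j)"

text \<open>State (x_k, v_k) as a function of the sample path omega.
  Parameters: step alpha, mixing matrix A, regularizers r, sampled gradient G,
  batch sizes S, consensus rounds tau, samples xi i k p omega, initial point x0.\<close>
fun vspgr :: "real \<Rightarrow> ('n::finite \<Rightarrow> 'n \<Rightarrow> real) \<Rightarrow> ('n \<Rightarrow> 'a::euclidean_space \<Rightarrow> ereal)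
    \<Rightarrow> ('n \<Rightarrow> 'a \<Rightarrow> 'a \<Rightarrow> 'b \<Rightarrow> 'a) \<Rightarrow> (nat \<Rightarrow> nat) \<Rightarrow> (nat \<Rightarrow> nat)
    \<Rightarrow> ('n \<Rightarrow> nat \<Rightarrow> nat \<Rightarrow> 'w \<Rightarrow> 'b) \<Rightarrow> ('n \<Rightarrow> 'a) \<Rightarrow> nat \<Rightarrow> 'w \<Rightarrow> ('n \<Rightarrow> 'a) \<times> ('n \<Rightarrow> 'a)"
where
  "vspgr \<alpha> A r G S \<tau> \<xi> x0 0 \<omega> = (x0, x0)"
| "vspgr \<alpha> A r G S \<tau> \<xi> x0 (Suc k) \<omega> =
     (let x = fst (vspgr \<alpha> A r G S \<tau> \<xi> x0 k \<omega>);
          v = snd (vspgr \<alpha> A r G S \<tau> \<xi> x0 k \<omega>);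
          vh = (mix A ^^ \<tau> k) v;
          xn = (\<lambda>i. prox \<alpha> (r i) (x i - (\<alpha> / real (S k)) *\<^sub>R
                   (\<Sum>p\<in>{1..S k}. G i (x i) (real CARD('n) *\<^sub>R vh i) (\<xi> i k p \<omega>))))
      in (xn, \<lambda>i. vh i + xn i - x i))"

definition vs_x where
  "vs_x \<alpha> A r G S \<tau> \<xi> x0 k \<omega> = fst (vspgr \<alpha> A r G S \<tau> \<xi> x0 k \<omega>)"

definition vs_vhat where
  "vs_vhat \<alpha> A r G S \<tau> \<xi> x0 k \<omega> = (mix A ^^ \<tau> k) (snd (vspgr \<alpha> A r G S \<tau> \<xi> x0 k \<omega>))"

definition vs_err :: "real \<Rightarrow> ('n::finite \<Rightarrow> 'n \<Rightarrow> real) \<Rightarrow> ('n \<Rightarrow> 'a::euclidean_space \<Rightarrow> ereal)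
    \<Rightarrow> ('n \<Rightarrow> 'a \<Rightarrow> 'a \<Rightarrow> 'b \<Rightarrow> 'a) \<Rightarrow> ('n \<Rightarrow> 'a \<Rightarrow> 'a \<Rightarrow> 'a) \<Rightarrow> (nat \<Rightarrow> nat) \<Rightarrow> (nat \<Rightarrow> nat)
    \<Rightarrow> ('n \<Rightarrow> nat \<Rightarrow> nat \<Rightarrow> 'w \<Rightarrow> 'b) \<Rightarrow> ('n \<Rightarrow> 'a) \<Rightarrow> nat \<Rightarrow> 'n \<Rightarrow> 'w \<Rightarrow> 'a" where
  "vs_err \<alpha> A r G F S \<tau> \<xi> x0 k i \<omega> =
     (let x = vs_x \<alpha> A r G S \<tau> \<xi> x0 k \<omega>; vh = vs_vhat \<alpha> A r G S \<tau> \<xi> x0 k \<omega>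
      in (1 / real (S k)) *\<^sub>R (\<Sum>p\<in>{1..S k}. G i (x i) (real CARD('n) *\<^sub>R vh i) (\<xi> i k p \<omega>))
         - F i (x i) (real CARD('n) *\<^sub>R vh i))"

text \<open>Natural filtration F_k = sigma{x_0, ..., x_k} (on the sample space of M).\<close>
definition nat_filt :: "'w measure \<Rightarrow> (nat \<Rightarrow> 'w \<Rightarrow> 'n \<Rightarrow> 'a::topological_space) \<Rightarrow> nat \<Rightarrow> 'w measure" where
  "nat_filt M X k = sigma (space M)
     (\<Union>j\<in>{..k}. \<Union>i. {(\<lambda>\<omega>. X j \<omega> i) -` B \<inter> space M | B. B \<in> sets borel})"

end

theory Submission
  imports Defs
begin

text \<open>
  A VS-PGR step is a proximal gradient step whose gradient is perturbed by the sampling noise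
  \<open>e\<^sub>k\<close> and by the bias of evaluating \<open>F\<^sub>i\<close> at the tracked aggregate \<open>n v\<^sub>i\<^sub>,\<^sub>k\<close> instead of
  \<open>\<Sum>\<^sub>j x\<^sub>j\<^sub>,\<^sub>k\<close>. The Nash equilibrium is a fixed point of the exact proximal gradient map and
  \<open>prox\<close> is nonexpansive, so strong monotonicity and Lipschitz continuity of \<open>\<phi>\<close> contract
  \<open>\<parallel>x\<^sub>k - x\<^sup>*\<parallel>\<^sup>2\<close> up to the two perturbations. The noise enters only through its conditional
  second moment, which the batch size \<open>S\<^sub>k\<close> makes \<open>O(\<rho>\<^sup>k\<^sup>+\<^sup>1)\<close>. The bias is Lipschitz in the
  tracking error, which is \<open>O(\<beta>\<^sup>k\<^sup>+\<^sup>1)\<close> because with \<open>\<tau>\<^sub>k = k + 1\<close> consensus rounds the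
  iterate increment of step \<open>s\<close> has been mixed at least \<open>2k + 1 - s\<close> times by step \<open>k\<close>.
\<close>

section \<open>Proximal maps\<close>

lemma closed_sublevel_add_continuous:
  fixes g :: "'a::first_countable_topology \<Rightarrow> ereal" and q :: "'a \<Rightarrow> real"
  assumes lsc: "lsc_fun g" and q: "continuous_on UNIV q"
  shows "closed {y. g y + ereal (q y) \<le> ereal c}"
  unfolding closed_sequential_limits
proof (intro allI impI, elim conjE)
  fix Y l assume Y: "\<forall>m. Y m \<in> {y. g y + ereal (q y) \<le> ereal c}" and lim: "Y \<longlonglongrightarrow> l"
  have ql: "(\<lambda>m. q (Y m)) \<longlonglongrightarrow> q l"
    using continuous_on_tendsto_compose[OF q lim] by simp
  have "g l + ereal (q l) \<le> ereal c + ereal \<epsilon>" if "0 < \<epsilon>" for \<epsilon>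
  proof -
    from ql that obtain N where N: "\<forall>m\<ge>N. dist (q (Y m)) (q l) < \<epsilon>"
      unfolding lim_sequentially by blast
    have mem: "Y (m + N) \<in> {y. g y \<le> ereal (c - q l + \<epsilon>)}" for m
    proof -
      have "g (Y (m + N)) \<le> ereal (c - q (Y (m + N)))"
        using Y[rule_format, of "m + N"] by (cases "g (Y (m + N))") auto
      also have "\<dots> \<le> ereal (c - q l + \<epsilon>)"
        using N[rule_format, of "m + N"] by (auto simp: dist_real_def)
      finally show ?thesis by simp
    qed
    have "closed {y. g y \<le> ereal (c - q l + \<epsilon>)}"
      using lsc unfolding lsc_fun_def by blast
    from closed_sequentially[OF this mem LIMSEQ_ignore_initial_segment[OF lim]]
    show ?thesis by (cases "g l") auto
  qed
  then show "l \<in> {y. g y + ereal (q y) \<le> ereal c}"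
    by (simp add: ereal_le_epsilon2)
qed

lemma ereal_real_of_edom:
  assumes "\<forall>x. g x \<noteq> -\<infinity>" "w \<in> edom g"
  shows "g w = ereal (real_of_ereal (g w))"
  using assms unfolding edom_def by (cases "g w") auto

lemma prox_minimizes:
  fixes g :: "'a::real_normed_vector \<Rightarrow> ereal"
  assumes proper: "\<forall>x. g x \<noteq> -\<infinity>" and lsc: "lsc_fun g" and cpt: "compact (edom g)"
    and ne: "edom g \<noteq> {}"
  shows "g (prox \<alpha> g z) + ereal (norm (prox \<alpha> g z - z)^2 / (2*\<alpha>))
           \<le> g w + ereal (norm (w - z)^2 / (2*\<alpha>))"
proof -
  define h where "h y = g y + ereal (norm (y - z)^2 / (2*\<alpha>))" for y
  define T where "T w = {y. h y \<le> h w}" for w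
  have "closed (T w)" if "w \<in> edom g" for w
  proof -
    have "continuous_on UNIV (\<lambda>y. norm (y - z)^2 / (2*\<alpha>))"
      unfolding divide_inverse by (intro continuous_intros)
    moreover have "h w = ereal (real_of_ereal (g w) + norm (w - z)^2 / (2*\<alpha>))"
      unfolding h_def by (subst ereal_real_of_edom[OF proper that]) simp
    ultimately show ?thesis
      unfolding T_def h_def using closed_sublevel_add_continuous[OF lsc] by simp
  qed
  moreover have "edom g \<inter> (\<Inter>w\<in>I. T w) \<noteq> {}" if "finite I" "I \<subseteq> edom g" for I
  proof (cases "I = {}")
    case False
    have "Min (h ` I) \<in> h ` I"
      using \<open>finite I\<close> False by (intro Min_in) auto
    then obtain w0 where "w0 \<in> I" "h w0 = Min (h ` I)"
      by auto
    then have "w0 \<in> edom g \<inter> (\<Inter>w\<in>I. T w)"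
      using that unfolding T_def by auto
    then show ?thesis by blast
  qed (use ne in simp)
  ultimately have "edom g \<inter> (\<Inter>w\<in>edom g. T w) \<noteq> {}"
    by (rule compact_imp_fip_image[OF cpt])
  then obtain p where p: "p \<in> edom g" "\<forall>w\<in>edom g. h p \<le> h w"
    unfolding T_def by auto
  have "\<forall>w. h p \<le> h w"
  proof
    fix w show "h p \<le> h w"
      using p by (cases "w \<in> edom g") (auto simp: h_def edom_def)
  qed
  then have "\<forall>w. h (prox \<alpha> g z) \<le> h w"
    unfolding prox_def h_def[symmetric] by (rule someI)
  then show ?thesis unfolding h_def by blast
qed

lemma prox_in_edom:
  fixes g :: "'a::real_normed_vector \<Rightarrow> ereal"
  assumes "\<forall>x. g x \<noteq> -\<infinity>" "lsc_fun g" "compact (edom g)" "edom g \<noteq> {}"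
  shows "prox \<alpha> g z \<in> edom g"
proof -
  obtain w where "w \<in> edom g" using assms(4) by auto
  then have "g w + ereal (norm (w - z)^2 / (2*\<alpha>)) < \<infinity>"
    unfolding edom_def by auto
  then have "g (prox \<alpha> g z) + ereal (norm (prox \<alpha> g z - z)^2 / (2*\<alpha>)) < \<infinity>"
    using prox_minimizes[OF assms] le_less_trans by blast
  then show ?thesis unfolding edom_def by auto
qed

text \<open>The optimality condition of \<open>prox\<^sub>\<alpha>\<^sub>g(z) = p\<close>: \<open>(z - p) / \<alpha>\<close> is a subgradient of \<open>g\<close> at \<open>p\<close>.\<close>
definition is_prox_point :: "('a::real_inner \<Rightarrow> ereal) \<Rightarrow> real \<Rightarrow> 'a \<Rightarrow> 'a \<Rightarrow> bool" where
  "is_prox_point g \<alpha> z p \<longleftrightarrow> p \<in> edom g \<and>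
     (\<forall>w\<in>edom g. real_of_ereal (g p) + inner (z - p) (w - p) / \<alpha> \<le> real_of_ereal (g w))"

lemma le_if_le_plus_small_multiples:
  fixes a b c :: real
  assumes "\<And>t. 0 < t \<Longrightarrow> t < 1 \<Longrightarrow> a \<le> b + t * c"
  shows "a \<le> b"
proof -
  have "((\<lambda>t. b + t * c) \<longlongrightarrow> b + 0 * c) (at_right 0)"
    by (intro tendsto_intros)
  moreover have "eventually (\<lambda>t. a \<le> b + t * c) (at_right (0::real))"
    using eventually_at_right_real[of 0 1] by (rule eventually_mono) (use assms in auto)
  ultimately show ?thesis
    using tendsto_lowerbound by fastforce
qed

lemma norm_add_scaleR_power2:
  fixes u d :: "'a::real_inner"
  shows "norm (u + t *\<^sub>R d)^2 = norm u^2 + 2 * t * inner u d + t^2 * norm d^2"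
  by (simp only: power2_norm_eq_inner)
    (simp add: inner_add_left inner_add_right inner_commute algebra_simps power2_eq_square)

lemma prox_is_prox_point:
  fixes g :: "'a::real_inner \<Rightarrow> ereal"
  assumes proper: "\<forall>x. g x \<noteq> -\<infinity>" and lsc: "lsc_fun g" and cpt: "compact (edom g)"
    and ne: "edom g \<noteq> {}" and cvx: "econvex g" and \<alpha>: "\<alpha> > 0"
  shows "is_prox_point g \<alpha> z (prox \<alpha> g z)"
proof -
  define p where "p = prox \<alpha> g z"
  have p: "p \<in> edom g"
    unfolding p_def by (rule prox_in_edom[OF proper lsc cpt ne])
  have "real_of_ereal (g p) + inner (z - p) (w - p) / \<alpha> \<le> real_of_ereal (g w)"
    if w: "w \<in> edom g" for w
  proof -
    define a b where "a = real_of_ereal (g p)" and "b = real_of_ereal (g w)"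
    have gp: "g p = ereal a" and gw: "g w = ereal b"
      unfolding a_def b_def using ereal_real_of_edom[OF proper] p w by blast+
    \<comment> \<open>compare \<open>p\<close> with the points \<open>(1 - t) p + t w\<close> of the segment towards \<open>w\<close>\<close>
    have "a - b \<le> inner (p - z) (w - p) / \<alpha> + t * (norm (w - p)^2 / (2*\<alpha>))"
      if t: "0 < t" "t < 1" for t
    proof -
      define y where "y = (1 - t) *\<^sub>R p + t *\<^sub>R w"
      have "g y \<le> ereal (1 - t) * g p + ereal t * g w"
        using cvx t unfolding econvex_def y_def by blast
      then have "g y \<le> ereal ((1 - t) * a + t * b)"
        unfolding gp gw by simp
      moreover have "g p + ereal (norm (p - z)^2 / (2*\<alpha>)) \<le> g y + ereal (norm (y - z)^2 / (2*\<alpha>))"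
        unfolding p_def by (rule prox_minimizes[OF proper lsc cpt ne])
      ultimately have "a + norm (p - z)^2 / (2*\<alpha>) \<le> (1 - t) * a + t * b + norm (y - z)^2 / (2*\<alpha>)"
        unfolding gp by (cases "g y") auto
      moreover have "norm (y - z)^2 = norm (p - z)^2 + 2 * t * inner (p - z) (w - p) + t^2 * norm (w - p)^2"
        unfolding norm_add_scaleR_power2[symmetric] y_def by (simp add: algebra_simps)
      moreover have "(norm (p - z)^2 + 2 * t * inner (p - z) (w - p) + t^2 * norm (w - p)^2) / (2*\<alpha>)
          = norm (p - z)^2 / (2*\<alpha>) + t * (inner (p - z) (w - p) / \<alpha> + t * (norm (w - p)^2 / (2*\<alpha>)))"
        using \<alpha> by (simp add: field_simps power2_eq_square)
      ultimately have "t * (a - b) \<le> t * (inner (p - z) (w - p) / \<alpha> + t * (norm (w - p)^2 / (2*\<alpha>)))"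
        by (simp add: algebra_simps)
      then show ?thesis using t by simp
    qed
    then have "a - b \<le> inner (p - z) (w - p) / \<alpha>"
      by (rule le_if_le_plus_small_multiples)
    moreover have "inner (z - p) (w - p) / \<alpha> = - (inner (p - z) (w - p) / \<alpha>)"
      by (simp add: inner_diff_left diff_divide_distrib)
    ultimately show ?thesis
      unfolding a_def b_def by linarith
  qed
  then show ?thesis using p unfolding is_prox_point_def p_def by blast
qed

lemma is_prox_point_nonexpansive:
  fixes p1 p2 z1 z2 :: "'a::real_inner"
  assumes "is_prox_point g \<alpha> z1 p1" "is_prox_point g \<alpha> z2 p2" "\<alpha> > 0"
  shows "norm (p1 - p2) \<le> norm (z1 - z2)"
proof -
  have "inner (z1 - p1) (p2 - p1) / \<alpha> + inner (z2 - p2) (p1 - p2) / \<alpha> \<le> 0"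
    using assms(1,2) unfolding is_prox_point_def by fastforce
  then have "inner (z1 - p1) (p2 - p1) + inner (z2 - p2) (p1 - p2) \<le> 0"
    using assms(3) by (simp add: add_divide_distrib[symmetric] divide_le_0_iff)
  moreover have "inner (z1 - p1) (p2 - p1) + inner (z2 - p2) (p1 - p2)
      = norm (p1 - p2)^2 - inner (z1 - z2) (p1 - p2)"
    by (simp add: power2_norm_eq_inner inner_diff_left inner_diff_right inner_commute algebra_simps)
  ultimately have "norm (p1 - p2)^2 \<le> inner (z1 - z2) (p1 - p2)" by simp
  also have "\<dots> \<le> norm (z1 - z2) * norm (p1 - p2)" by (rule norm_cauchy_schwarz)
  finally show ?thesis
    by (cases "p1 = p2") (auto simp: power2_eq_square)
qed

lemma continuous_on_prox:
  fixes g :: "'a::real_inner \<Rightarrow> ereal"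
  assumes "\<forall>x. g x \<noteq> -\<infinity>" "lsc_fun g" "compact (edom g)" "edom g \<noteq> {}" "econvex g" "\<alpha> > 0"
  shows "continuous_on UNIV (prox \<alpha> g)"
  unfolding continuous_on_iff dist_norm
  using is_prox_point_nonexpansive[OF prox_is_prox_point[OF assms] prox_is_prox_point[OF assms] \<open>\<alpha> > 0\<close>]
  by (meson le_less_trans)

lemma directional_derivative_ge:
  fixes f :: "'a::real_normed_vector \<Rightarrow> real"
  assumes f: "(f has_derivative f') (at p)"
    and quotient: "\<And>t. 0 < t \<Longrightarrow> t < 1 \<Longrightarrow> c \<le> (f (p + t *\<^sub>R d) - f p) / t"
  shows "c \<le> f' d"
proof -
  define \<phi> where "\<phi> t = f (p + t *\<^sub>R d)" for t :: real
  have "((\<lambda>t. p + t *\<^sub>R d) has_derivative (\<lambda>t. t *\<^sub>R d)) (at 0)"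
    by (intro derivative_eq_intros) auto
  moreover have "(f has_derivative f') (at (p + 0 *\<^sub>R d))"
    using f by simp
  ultimately have "(\<phi> has_derivative (\<lambda>t. f' (t *\<^sub>R d))) (at 0)"
    unfolding \<phi>_def by (rule has_derivative_compose)
  moreover have "(\<lambda>t. f' (t *\<^sub>R d)) = (\<lambda>t. f' d * t)"
    using linear_cmul[OF bounded_linear.linear[OF has_derivative_bounded_linear[OF f]]]
    by (simp add: fun_eq_iff mult.commute)
  ultimately have "(\<phi> has_field_derivative f' d) (at 0)"
    by (simp add: has_field_derivative_def)
  then have "(\<phi> has_field_derivative f' d) (at 0 within {0<..})"
    by (rule has_field_derivative_at_within)
  then have "((\<lambda>t. (\<phi> t - \<phi> 0) / t) \<longlongrightarrow> f' d) (at_right 0)"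
    by (simp add: has_field_derivative_iff)
  moreover have "eventually (\<lambda>t. c \<le> (\<phi> t - \<phi> 0) / t) (at_right 0)"
    using eventually_at_right_real[of 0 1] by (rule eventually_mono) (auto simp: \<phi>_def quotient)
  ultimately show ?thesis
    by (rule tendsto_lowerbound) simp
qed

lemma minimizer_is_prox_point:
  fixes f :: "'a::real_inner \<Rightarrow> real" and g :: "'a \<Rightarrow> ereal"
  assumes proper: "\<forall>x. g x \<noteq> -\<infinity>" and cvx: "econvex g" and p: "p \<in> edom g"
    and f: "(f has_derivative (\<lambda>h. inner D h)) (at p)"
    and min: "\<forall>y. ereal (f p) + g p \<le> ereal (f y) + g y" and \<alpha>: "\<alpha> > 0"
  shows "is_prox_point g \<alpha> (p - \<alpha> *\<^sub>R D) p"
proof -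
  have "real_of_ereal (g p) - inner D (w - p) \<le> real_of_ereal (g w)" if w: "w \<in> edom g" for w
  proof -
    define a b where "a = real_of_ereal (g p)" and "b = real_of_ereal (g w)"
    have gp: "g p = ereal a" and gw: "g w = ereal b"
      unfolding a_def b_def using ereal_real_of_edom[OF proper] p w by blast+
    have "a - b \<le> (f (p + t *\<^sub>R (w - p)) - f p) / t" if t: "0 < t" "t < 1" for t
    proof -
      have "p + t *\<^sub>R (w - p) = (1 - t) *\<^sub>R p + t *\<^sub>R w"
        by (simp add: algebra_simps)
      moreover have "g ((1 - t) *\<^sub>R p + t *\<^sub>R w) \<le> ereal (1 - t) * g p + ereal t * g w"
        using cvx t unfolding econvex_def by blast
      ultimately have "g (p + t *\<^sub>R (w - p)) \<le> ereal ((1 - t) * a + t * b)"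
        unfolding gp gw by simp
      moreover have "ereal (f p) + g p \<le> ereal (f (p + t *\<^sub>R (w - p))) + g (p + t *\<^sub>R (w - p))"
        using min by blast
      ultimately have "f p + a \<le> f (p + t *\<^sub>R (w - p)) + ((1 - t) * a + t * b)"
        unfolding gp by (cases "g (p + t *\<^sub>R (w - p))") auto
      then have "t * (a - b) \<le> f (p + t *\<^sub>R (w - p)) - f p"
        by (simp add: algebra_simps)
      then show ?thesis using t by (simp add: field_simps)
    qed
    then have "a - b \<le> inner D (w - p)"
      by (rule directional_derivative_ge[OF f])
    then show ?thesis unfolding a_def b_def by simp
  qed
  then show ?thesis
    using p \<alpha> unfolding is_prox_point_def by (simp add: inner_diff_left)
qed

section \<open>Consensus and tracking of the aggregate\<close>

lemma funpow_mix_apply: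
  fixes A :: "'n::finite \<Rightarrow> 'n \<Rightarrow> real" and w :: "'n \<Rightarrow> 'a::real_vector"
  shows "(mix A ^^ m) w i = (\<Sum>j\<in>UNIV. matpow A m i j *\<^sub>R w j)"
proof (induction m arbitrary: w i)
  case 0
  have "(\<Sum>j\<in>UNIV. matpow A 0 i j *\<^sub>R w j) = (\<Sum>j\<in>UNIV. if i = j then w j else 0)"
    by (rule sum.cong) auto
  then show ?case by simp
next
  case (Suc m)
  have "(mix A ^^ Suc m) w i = (mix A ^^ m) (mix A w) i"
    by (simp only: funpow_Suc_right comp_def)
  also have "\<dots> = (\<Sum>j\<in>UNIV. \<Sum>l\<in>UNIV. (matpow A m i j * A j l) *\<^sub>R w l)"
    by (simp add: Suc.IH mix_def scaleR_sum_right)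
  also have "\<dots> = (\<Sum>l\<in>UNIV. \<Sum>j\<in>UNIV. (matpow A m i j * A j l) *\<^sub>R w l)"
    by (rule sum.swap)
  finally show ?case
    by (simp add: scaleR_sum_left)
qed

lemma funpow_mix_sum:
  fixes A :: "'n::finite \<Rightarrow> 'n \<Rightarrow> real" and u :: "'s \<Rightarrow> 'n \<Rightarrow> 'a::real_vector"
  shows "(mix A ^^ m) (\<lambda>i. \<Sum>s\<in>S. u s i) i = (\<Sum>s\<in>S. (mix A ^^ m) (u s) i)"
  by (simp add: funpow_mix_apply scaleR_sum_right) (rule sum.swap)

lemma consensus_error_le:
  fixes A :: "'n::finite \<Rightarrow> 'n \<Rightarrow> real" and w :: "'n \<Rightarrow> 'a::real_normed_vector"
  assumes geom: "\<forall>k\<ge>1. \<forall>i j. \<bar>matpow A k i j - 1 / real CARD('n)\<bar> \<le> \<theta> * \<beta> ^ k" and "m \<ge> 1"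
  shows "norm (real CARD('n) *\<^sub>R (mix A ^^ m) w i - (\<Sum>j\<in>UNIV. w j))
           \<le> real CARD('n) * \<theta> * \<beta> ^ m * (\<Sum>j\<in>UNIV. norm (w j))"
proof -
  define n where "n = real CARD('n)"
  have n: "n > 0" unfolding n_def by simp
  have "n *\<^sub>R (mix A ^^ m) w i - (\<Sum>j\<in>UNIV. w j)
      = (\<Sum>j\<in>UNIV. (n * (matpow A m i j - 1 / n)) *\<^sub>R w j)"
    using n by (simp add: funpow_mix_apply scaleR_sum_right sum_subtractf[symmetric]
        algebra_simps scaleR_diff_left)
  also have "norm \<dots> \<le> (\<Sum>j\<in>UNIV. (n * \<theta> * \<beta> ^ m) * norm (w j))"
  proof (rule order.trans[OF norm_sum sum_mono])
    fix j
    have "\<bar>matpow A m i j - 1 / n\<bar> * norm (w j) \<le> (\<theta> * \<beta> ^ m) * norm (w j)"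
      using geom \<open>m \<ge> 1\<close> unfolding n_def by (intro mult_right_mono) auto
    then show "norm ((n * (matpow A m i j - 1 / n)) *\<^sub>R w j) \<le> (n * \<theta> * \<beta> ^ m) * norm (w j)"
      using n by (simp add: abs_mult mult.assoc)
  qed
  finally show ?thesis
    unfolding n_def by (simp add: sum_distrib_left)
qed

lemma funpow_comp_apply: "(f ^^ a) ((f ^^ b) w) = (f ^^ (a + b)) w"
  by (simp add: funpow_add)

definition increment :: "(nat \<Rightarrow> 'n \<Rightarrow> 'a::ab_group_add) \<Rightarrow> nat \<Rightarrow> 'n \<Rightarrow> 'a" where
  "increment x s = (case s of 0 \<Rightarrow> x 0 | Suc t \<Rightarrow> (\<lambda>i. x (Suc t) i - x t i))"

lemma sum_increment: "(\<Sum>s\<le>k. increment x s i) = x k i"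
  by (induction k) (simp_all add: increment_def)

lemma sum_norm_increment_le:
  fixes x :: "nat \<Rightarrow> 'n::finite \<Rightarrow> 'a::real_normed_vector"
  assumes "\<forall>k. (\<Sum>j\<in>UNIV. norm (x k j)) \<le> D"
  shows "(\<Sum>j\<in>UNIV. norm (increment x s j)) \<le> 2 * D"
proof (cases s)
  case 0
  have "0 \<le> D" using assms by (metis order.trans sum_nonneg norm_ge_zero)
  with assms[rule_format, of 0] show ?thesis
    using 0 by (simp add: increment_def)
next
  case (Suc t)
  have "(\<Sum>j\<in>UNIV. norm (increment x s j)) \<le> (\<Sum>j\<in>UNIV. norm (x (Suc t) j) + norm (x t j))"
    unfolding Suc increment_def by (auto intro!: sum_mono norm_triangle_ineq4)
  also have "\<dots> \<le> 2 * D"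
    using assms[rule_format, of t] assms[rule_format, of "Suc t"] by (simp add: sum.distrib)
  finally show ?thesis .
qed

text \<open>Unrolling \<open>v\<^sub>k\<^sub>+\<^sub>1 = W\<^bsup>k+1\<^esup> v\<^sub>k + x\<^sub>k\<^sub>+\<^sub>1 - x\<^sub>k\<close>: the increment made at step \<open>s\<close> has passed
  through \<open>(s + 1) + \<dots> + (k + 1) \<ge> 2k + 1 - s\<close> mixing rounds by the time \<open>v\<^sub>k\<close> is mixed again.\<close>
lemma tracking_unrolled:
  fixes A :: "'n::finite \<Rightarrow> 'n \<Rightarrow> real" and x v :: "nat \<Rightarrow> 'n \<Rightarrow> 'a::real_vector"
  assumes v0: "v 0 = x 0"
    and vSuc: "\<forall>k. v (Suc k) = (\<lambda>i. (mix A ^^ (k + 1)) (v k) i + x (Suc k) i - x k i)"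
  shows "(mix A ^^ (k + 1)) (v k) i
           = (\<Sum>s\<le>k. (mix A ^^ (\<Sum>t\<in>{s..k}. t + 1)) (increment x s) i)"
proof -
  have unrolled: "v k = (\<lambda>i. \<Sum>s\<le>k. (mix A ^^ (\<Sum>t\<in>{s..<k}. t + 1)) (increment x s) i)"
  proof (induction k)
    case 0
    show ?case using v0 by (simp add: increment_def)
  next
    case (Suc k)
    have "(mix A ^^ (k + 1)) (v k) i = (\<Sum>s\<le>k. (mix A ^^ (\<Sum>t\<in>{s..<Suc k}. t + 1)) (increment x s) i)"
      for i unfolding Suc funpow_mix_sum funpow_comp_apply
      by (intro sum.cong refl) (simp add: add.commute)
    then show ?case
      using vSuc by (simp add: increment_def algebra_simps)
  qed
  show ?thesis
    unfolding unrolled funpow_mix_sum funpow_comp_apply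
    by (intro sum.cong refl) (simp add: add.commute atLeastLessThanSuc_atLeastAtMost[symmetric])
qed

lemma sum_power_tail_le:
  fixes \<beta> :: real assumes "0 < \<beta>" "\<beta> < 1"
  shows "(\<Sum>s\<le>k. \<beta> ^ (2*k + 1 - s)) \<le> \<beta> ^ (k + 1) / (1 - \<beta>)"
proof (induction k)
  case 0 then show ?case using assms by (simp add: field_simps)
next
  case (Suc k)
  have "(\<Sum>s\<le>k. \<beta> ^ (2 * Suc k + 1 - s)) = \<beta>^2 * (\<Sum>s\<le>k. \<beta> ^ (2*k + 1 - s))"
    unfolding sum_distrib_left
    by (intro sum.cong refl) (simp add: power_add[symmetric] Suc_diff_le)
  also have "\<dots> \<le> \<beta>^2 * (\<beta> ^ (k + 1) / (1 - \<beta>))"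
    using Suc by (intro mult_left_mono) auto
  finally show ?case
    using assms by (simp add: field_simps power2_eq_square)
qed

lemma tracking_error_le:
  fixes A :: "'n::finite \<Rightarrow> 'n \<Rightarrow> real" and x v :: "nat \<Rightarrow> 'n \<Rightarrow> 'a::real_normed_vector"
  assumes geom: "\<forall>k\<ge>1. \<forall>i j. \<bar>matpow A k i j - 1 / real CARD('n)\<bar> \<le> \<theta> * \<beta> ^ k"
    and \<beta>: "0 < \<beta>" "\<beta> < 1" and "0 \<le> \<theta>"
    and v0: "v 0 = x 0"
    and vSuc: "\<forall>k. v (Suc k) = (\<lambda>i. (mix A ^^ (k + 1)) (v k) i + x (Suc k) i - x k i)"
    and D: "\<forall>k. (\<Sum>j\<in>UNIV. norm (x k j)) \<le> D"
  shows "norm (real CARD('n) *\<^sub>R (mix A ^^ (k + 1)) (v k) i - (\<Sum>j\<in>UNIV. x k j))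
           \<le> real CARD('n) * \<theta> * (2 * D) * (\<beta> ^ (k + 1) / (1 - \<beta>))"
proof -
  define n where "n = real CARD('n)"
  define N where "N s = (\<Sum>t\<in>{s..k}. t + 1)" for s
  have "0 \<le> D" using D by (metis order.trans sum_nonneg norm_ge_zero)
  have "n *\<^sub>R (mix A ^^ (k + 1)) (v k) i - (\<Sum>j\<in>UNIV. x k j)
      = (\<Sum>s\<le>k. n *\<^sub>R (mix A ^^ N s) (increment x s) i - (\<Sum>j\<in>UNIV. increment x s j))"
    unfolding tracking_unrolled[OF v0 vSuc] N_def sum_increment[where x=x and k=k, symmetric]
    by (simp add: scaleR_sum_right sum_subtractf sum.swap[of _ UNIV])
  also have "norm \<dots> \<le> (\<Sum>s\<le>k. n * \<theta> * (2 * D) * \<beta> ^ (2*k + 1 - s))"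
  proof (rule order.trans[OF norm_sum sum_mono])
    fix s assume "s \<in> {..k}"
    then have "N s \<ge> 1" "2*k + 1 - s \<le> N s"
      unfolding N_def using sum_mono[of "{s..<k}" "\<lambda>_. 1::nat" "\<lambda>t. t + 1"]
      by (auto simp: atLeastLessThanSuc_atLeastAtMost[symmetric])
    then have "norm (n *\<^sub>R (mix A ^^ N s) (increment x s) i - (\<Sum>j\<in>UNIV. increment x s j))
          \<le> n * \<theta> * \<beta> ^ N s * (2 * D)"
      using consensus_error_le[OF geom, of "N s" "increment x s" i] sum_norm_increment_le[OF D, of s]
        \<open>0 \<le> \<theta>\<close> \<beta> unfolding n_def by (smt (verit) mult_left_mono mult_nonneg_nonneg of_nat_0_le_iff zero_le_power)
    also have "\<dots> \<le> n * \<theta> * \<beta> ^ (2*k + 1 - s) * (2 * D)"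
      using \<open>2*k + 1 - s \<le> N s\<close> \<beta> \<open>0 \<le> \<theta>\<close> \<open>0 \<le> D\<close> unfolding n_def
      by (intro mult_right_mono mult_left_mono power_decreasing) auto
    finally show "norm (n *\<^sub>R (mix A ^^ N s) (increment x s) i - (\<Sum>j\<in>UNIV. increment x s j))
          \<le> n * \<theta> * (2 * D) * \<beta> ^ (2*k + 1 - s)"
      by (simp add: algebra_simps)
  qed
  also have "\<dots> \<le> n * \<theta> * (2 * D) * (\<beta> ^ (k + 1) / (1 - \<beta>))"
    unfolding sum_distrib_left[symmetric] using sum_power_tail_le[OF \<beta>] \<open>0 \<le> \<theta>\<close> \<open>0 \<le> D\<close>
    unfolding n_def by (intro mult_left_mono) auto
  finally show ?thesis unfolding n_def .
qed

section \<open>Elementary estimates\<close>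

text \<open>The factor \<open>C\<^sub>2 / (2 \<theta> D\<^sub>R)\<close> of the paper. It comes from a cruder summation of the tracking
  error; all that is used of it below is that it dominates \<open>2 / (1 - \<beta>)\<close>.\<close>
definition tracking_const :: "real \<Rightarrow> real" where
  "tracking_const \<beta> = exp 1 * sqrt (1 / ln (\<beta> powr (-1/2)))
     + (2 + ln (1 / \<beta>)) / (\<beta> powr (1/2) * ln (1 / \<beta>))"

lemma two_div_one_minus_le_tracking_const:
  fixes \<beta> :: real assumes \<beta>: "0 < \<beta>" "\<beta> < 1"
  shows "2 / (1 - \<beta>) \<le> tracking_const \<beta>"
proof -
  define L s where "L = ln (1 / \<beta>)" and "s = sqrt \<beta>"
  have "L > 0" unfolding L_def using \<beta> by simp
  have "0 < s" "s < 1" "s * s = \<beta>" unfolding s_def using \<beta> by auto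
  have "L * \<beta> \<le> 1 - \<beta>"
    using ln_le_minus_one[of "1 / \<beta>"] \<beta> unfolding L_def by (simp add: field_simps)
  then have "\<beta> / (1 - \<beta>) \<le> 1 / L"
    using \<open>L > 0\<close> \<beta> by (simp add: field_simps)
  then have "2 / s * (\<beta> / (1 - \<beta>)) \<le> 2 / s * (1 / L)"
    using \<open>0 < s\<close> by (intro mult_left_mono) auto
  moreover have "2 * s / (1 - \<beta>) = 2 / s * (\<beta> / (1 - \<beta>))"
    using \<open>0 < s\<close> \<open>s * s = \<beta>\<close> \<beta> by (simp add: field_simps flip: \<open>s * s = \<beta>\<close>)
  ultimately have "2 * s / (1 - \<beta>) \<le> 2 / (s * L)"
    by simp
  moreover have "2 / (1 - \<beta>) = 2 * s / (1 - \<beta>) + 2 / (1 + s)"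
  proof -
    have factor: "1 - \<beta> = (1 - s) * (1 + s)"
      using \<open>s * s = \<beta>\<close> by (simp add: algebra_simps)
    have "2 / (1 - \<beta>) - 2 * s / (1 - \<beta>) = ((1 - s) * 2) / ((1 - s) * (1 + s))"
      unfolding factor diff_divide_distrib[symmetric] by (simp add: algebra_simps)
    also have "\<dots> = 2 / (1 + s)"
      using \<open>s < 1\<close> by (intro nonzero_mult_divide_mult_cancel_left) simp
    finally show ?thesis by simp
  qed
  moreover have "2 / (1 + s) \<le> 1 / s"
    using \<open>0 < s\<close> \<open>s < 1\<close> by (simp add: field_simps)
  moreover have "(2 + L) / (s * L) = 2 / (s * L) + 1 / s"
    using \<open>L > 0\<close> \<open>0 < s\<close> by (simp add: field_simps)
  moreover have "0 \<le> exp 1 * sqrt (1 / ln (\<beta> powr (-1/2)))"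
    using \<beta> by (simp add: ln_powr)
  moreover have "\<beta> powr (1/2) = s"
    unfolding s_def using \<beta> by (simp add: powr_half_sqrt)
  ultimately show ?thesis
    unfolding tracking_const_def L_def[symmetric] by simp
qed

lemma norm_add_power2_le:
  fixes x y :: "'a::real_normed_vector"
  shows "norm (x + y)^2 \<le> 2 * norm x^2 + 2 * norm y^2"
proof -
  have "norm (x + y)^2 \<le> (norm x + norm y)^2"
    by (rule power_mono[OF norm_triangle_ineq]) simp
  also have "\<dots> \<le> 2 * norm x^2 + 2 * norm y^2"
    using sum_squares_ge_zero[of "norm x - norm y" 0] by (simp add: power2_eq_square algebra_simps)
  finally show ?thesis .
qed

text \<open>The cross term
  \<open>\<langle>u, e\<rangle>\<close> is absorbed by AM-GM so that the noise appears only through \<open>\<parallel>e\<parallel>\<^sup>2\<close>, whose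
  conditional expectation is controlled.\<close>
lemma perturbed_gradient_step_le:
  fixes u a e d :: "'a::real_inner"
  assumes "\<alpha> \<ge> 0"
  shows "norm (u - \<alpha> *\<^sub>R (a + e + d))^2 \<le> (1 + \<alpha>^2) * norm u^2 - 2 * \<alpha> * inner u a
     + (1 + 2 * \<alpha>^2) * norm e^2 + 4 * \<alpha>^2 * norm a^2 + 2 * \<alpha> * (norm u * norm d) + 4 * \<alpha>^2 * norm d^2"
proof -
  define w where "w = a + e + d"
  have "norm (u - \<alpha> *\<^sub>R w)^2 = norm u^2 - 2 * \<alpha> * (inner u a + inner u e + inner u d) + \<alpha>^2 * norm w^2"
    unfolding w_def by (simp only: power2_norm_eq_inner)
      (simp add: inner_diff_left inner_diff_right inner_add_right inner_commute algebra_simps power2_eq_square)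
  moreover have "- 2 * \<alpha> * inner u e \<le> \<alpha>^2 * norm u^2 + norm e^2"
  proof -
    have "norm (\<alpha> *\<^sub>R u + e)^2 = \<alpha>^2 * norm u^2 + 2 * \<alpha> * inner u e + norm e^2"
      by (simp only: power2_norm_eq_inner)
        (simp add: inner_add_left inner_add_right inner_commute algebra_simps power2_eq_square)
    then show ?thesis using zero_le_power2[of "norm (\<alpha> *\<^sub>R u + e)"] by linarith
  qed
  moreover have "- 2 * \<alpha> * inner u d \<le> 2 * \<alpha> * (norm u * norm d)"
    using mult_left_mono[OF norm_cauchy_schwarz[of u "- d"] assms] by (simp add: mult.commute)
  moreover have "norm w^2 \<le> 4 * norm a^2 + 2 * norm e^2 + 4 * norm d^2"
    using norm_add_power2_le[of "a + d" e] norm_add_power2_le[of a d]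
    unfolding w_def by (simp add: algebra_simps)
  then have "\<alpha>^2 * norm w^2 \<le> \<alpha>^2 * (4 * norm a^2 + 2 * norm e^2 + 4 * norm d^2)"
    by (rule mult_left_mono) simp
  ultimately show ?thesis
    unfolding w_def[symmetric] by (simp add: algebra_simps)
qed

lemma sum_variance_le:
  fixes x y :: "'n::finite \<Rightarrow> 'a::real_normed_vector" and a b :: "'n \<Rightarrow> real"
  assumes a: "\<forall>i. 0 \<le> a i \<and> a i \<le> a'" and s: "0 \<le> s" "1 / s \<le> c"
  shows "(\<Sum>i\<in>UNIV. ((a i)^2 * norm (x i)^2 + (b i)^2) / s)
           \<le> (2 * a'^2 * sq_dist x y + 2 * a'^2 * sq_norm y + (\<Sum>i\<in>UNIV. (b i)^2)) * c"
proof -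
  have "(a i)^2 * norm (x i)^2 \<le> a'^2 * (2 * norm (x i - y i)^2 + 2 * norm (y i)^2)" for i
    using norm_add_power2_le[of "x i - y i" "y i"] a by (intro mult_mono power_mono) auto
  then have "(\<Sum>i\<in>UNIV. (a i)^2 * norm (x i)^2) \<le> (\<Sum>i\<in>UNIV. a'^2 * (2 * norm (x i - y i)^2 + 2 * norm (y i)^2))"
    by (rule sum_mono)
  then have "(\<Sum>i\<in>UNIV. (a i)^2 * norm (x i)^2 + (b i)^2)
      \<le> 2 * a'^2 * sq_dist x y + 2 * a'^2 * sq_norm y + (\<Sum>i\<in>UNIV. (b i)^2)"
    unfolding sq_dist_def sq_norm_def
    by (simp add: sum.distrib sum_distrib_left algebra_simps)
  then have "(\<Sum>i\<in>UNIV. (a i)^2 * norm (x i)^2 + (b i)^2) * (1 / s)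
      \<le> (2 * a'^2 * sq_dist x y + 2 * a'^2 * sq_norm y + (\<Sum>i\<in>UNIV. (b i)^2)) * c"
    using s by (intro mult_mono') (auto intro: sum_nonneg)
  then show ?thesis
    by (simp add: sum_divide_distrib)
qed

lemma tracking_bound_le:
  fixes n \<theta> D \<beta> \<gamma> K :: real
  assumes "0 \<le> n" "0 \<le> \<theta>" "0 \<le> D" and \<beta>: "0 < \<beta>" "\<beta> < 1" "\<beta> \<le> \<gamma>" and K: "2 / (1 - \<beta>) \<le> K"
  shows "n * \<theta> * (2 * D) * (\<beta> ^ (k + 1) / (1 - \<beta>)) \<le> n * (\<theta> * D + 2 * \<theta> * D * K) * \<gamma> ^ (k + 1)"
    and "(n * \<theta> * (2 * D) * (\<beta> ^ (k + 1) / (1 - \<beta>)))^2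
           \<le> n^2 * \<beta> * ((\<theta> * D)^2 + (2 * \<theta> * D * K)^2) * \<gamma> ^ (k + 1)"
proof -
  define c where "c = \<theta> * D"
  have nc: "0 \<le> n" "0 \<le> c" unfolding c_def using assms(1-3) by auto
  have t: "n * \<theta> * (2 * D) * (\<beta> ^ (k + 1) / (1 - \<beta>)) = n * c * (2 / (1 - \<beta>)) * \<beta> ^ (k + 1)"
    unfolding c_def by (simp add: field_simps)
  have "0 \<le> 2 / (1 - \<beta>)" using \<beta> by simp
  then have "0 \<le> K" using K by linarith
  note K = K \<open>0 \<le> 2 / (1 - \<beta>)\<close> this
  have pow: "\<beta> ^ (k + 1) \<le> \<gamma> ^ (k + 1)" "\<beta> ^ (k + 1) \<le> \<beta>"
    using \<beta> power_mono[of \<beta> \<gamma> "k + 1"] power_decreasing[of 1 "k + 1" \<beta>] by auto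
  have "n * c * (2 / (1 - \<beta>)) * \<beta> ^ (k + 1) \<le> n * c * K * \<gamma> ^ (k + 1)"
    using nc \<beta> K pow by (intro mult_mono mult_left_mono) auto
  also have "\<dots> \<le> n * (c + 2 * c * K) * \<gamma> ^ (k + 1)"
    using nc \<beta> K pow by (intro mult_right_mono) (auto simp: algebra_simps mult_left_mono)
  finally show "n * \<theta> * (2 * D) * (\<beta> ^ (k + 1) / (1 - \<beta>)) \<le> n * (\<theta> * D + 2 * \<theta> * D * K) * \<gamma> ^ (k + 1)"
    unfolding t c_def by (simp add: mult.assoc)
  have "(n * c * (2 / (1 - \<beta>)) * \<beta> ^ (k + 1))^2
      = n^2 * (c * (2 / (1 - \<beta>)))^2 * (\<beta> ^ (k + 1) * \<beta> ^ (k + 1))"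
    by (simp add: power2_eq_square algebra_simps)
  also have "\<dots> \<le> n^2 * (c * K)^2 * (\<beta> * \<gamma> ^ (k + 1))"
    using nc \<beta> K pow by (intro mult_mono power_mono) auto
  also have "\<dots> \<le> n^2 * \<beta> * (c^2 + (2 * c * K)^2) * \<gamma> ^ (k + 1)"
    using nc \<beta> by (simp add: power_mult_distrib mult_left_mono algebra_simps)
  finally show "(n * \<theta> * (2 * D) * (\<beta> ^ (k + 1) / (1 - \<beta>)))^2
      \<le> n^2 * \<beta> * ((\<theta> * D)^2 + (2 * \<theta> * D * K)^2) * \<gamma> ^ (k + 1)"
    unfolding t c_def by (simp add: mult.assoc)
qed

lemma inverse_batch_size_le:
  fixes \<alpha> \<rho> :: real
  assumes "\<alpha> > 0" "\<rho> > 0" "S = nat \<lceil>(1 / \<alpha>^2) * (1 / \<rho>) ^ (k + 1)\<rceil>"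
  shows "1 / real S \<le> \<alpha>^2 * \<rho> ^ (k + 1)"
proof -
  have "1 / (\<alpha>^2 * \<rho> ^ (k + 1)) \<le> real S"
    using assms(3) real_nat_ceiling_ge by (simp add: power_one_over)
  then show ?thesis
    using assms(1,2) by (simp add: divide_simps mult.commute)
qed

lemma le_power2_mult_if_sqrt_le:
  fixes a b c :: real
  assumes "sqrt a \<le> c * sqrt b" "0 \<le> a" "0 \<le> b"
  shows "a \<le> c^2 * b"
proof -
  have "(sqrt a)^2 \<le> (c * sqrt b)^2"
    using assms(1,2) by (intro power_mono) auto
  then show ?thesis using assms(2,3) by (simp add: power_mult_distrib)
qed

lemma sq_dist_nonneg: "0 \<le> sq_dist x y"
  unfolding sq_dist_def by (simp add: sum_nonneg)

lemma add_others: "x i + others x i = (\<Sum>j\<in>UNIV. x j)"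
  unfolding others_def by (simp add: sum.remove[of UNIV i])

section \<open>Expectations\<close>

lemma integral_le_if_nn_cond_exp_le:
  fixes f g :: "'a \<Rightarrow> real"
  assumes "sigma_finite_subalgebra M F"
    and f: "f \<in> borel_measurable M" "\<And>\<omega>. 0 \<le> f \<omega>"
    and g: "integrable M g" "\<And>\<omega>. 0 \<le> g \<omega>"
    and le: "AE \<omega> in M. nn_cond_exp M F (\<lambda>\<omega>. ennreal (f \<omega>)) \<omega> \<le> ennreal (g \<omega>)"
  shows "integrable M f" and "(\<integral>\<omega>. f \<omega> \<partial>M) \<le> (\<integral>\<omega>. g \<omega> \<partial>M)"
proof -
  interpret sigma_finite_subalgebra M F by (rule assms(1))
  have "(\<integral>\<^sup>+\<omega>. ennreal (f \<omega>) \<partial>M) = (\<integral>\<^sup>+\<omega>. nn_cond_exp M F (\<lambda>\<omega>. ennreal (f \<omega>)) \<omega> \<partial>M)"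
    using nn_cond_exp_intg[of "\<lambda>_. 1" "\<lambda>\<omega>. ennreal (f \<omega>)"] f by simp
  also have "\<dots> \<le> (\<integral>\<^sup>+\<omega>. ennreal (g \<omega>) \<partial>M)"
    using le by (rule nn_integral_mono_AE)
  also have "\<dots> = ennreal (\<integral>\<omega>. g \<omega> \<partial>M)"
    using g by (intro nn_integral_eq_integral) auto
  finally have le_int: "(\<integral>\<^sup>+\<omega>. ennreal (f \<omega>) \<partial>M) \<le> ennreal (\<integral>\<omega>. g \<omega> \<partial>M)" .
  then show int: "integrable M f"
    using f by (intro integrableI_nonneg) (auto simp: top.not_eq_extremum le_less_trans)
  have "ennreal (\<integral>\<omega>. f \<omega> \<partial>M) \<le> ennreal (\<integral>\<omega>. g \<omega> \<partial>M)"
    using le_int int f by (simp add: nn_integral_eq_integral)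
  then show "(\<integral>\<omega>. f \<omega> \<partial>M) \<le> (\<integral>\<omega>. g \<omega> \<partial>M)"
    using g by (simp add: ennreal_le_iff integral_nonneg)
qed

lemma subalgebra_nat_filt:
  assumes "\<And>j i. (\<lambda>\<omega>. X j \<omega> i) \<in> borel_measurable M"
  shows "subalgebra M (nat_filt M X k)"
proof -
  define E where "E = (\<Union>j\<in>{..k}. \<Union>i. {(\<lambda>\<omega>. X j \<omega> i) -` B \<inter> space M | B. B \<in> sets borel})"
  have "E \<subseteq> sets M" unfolding E_def using assms by (auto intro!: measurable_sets)
  moreover have "E \<subseteq> Pow (space M)" unfolding E_def by auto
  ultimately show ?thesis
    unfolding subalgebra_def nat_filt_def E_def[symmetric]
    by (simp add: space_measure_of_conv sets_measure_of_conv sets.sigma_sets_subset)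
qed

section \<open>The VS-PGR iteration\<close>

locale vspgr_game =
  fixes A :: "'n::finite \<Rightarrow> 'n \<Rightarrow> real" and \<theta> \<beta> :: real
    and r :: "'n \<Rightarrow> 'a::euclidean_space \<Rightarrow> ereal"
    and f :: "'n \<Rightarrow> 'a \<Rightarrow> 'a \<Rightarrow> real" and \<phi> :: "'n \<Rightarrow> ('n \<Rightarrow> 'a) \<Rightarrow> 'a"
    and F :: "'n \<Rightarrow> 'a \<Rightarrow> 'a \<Rightarrow> 'a" and G :: "'n \<Rightarrow> 'a \<Rightarrow> 'a \<Rightarrow> 'b \<Rightarrow> 'a"
    and P :: "'n \<Rightarrow> 'b measure" and xs :: "'n \<Rightarrow> 'a"
    and M :: "'w measure" and \<xi> :: "'n \<Rightarrow> nat \<Rightarrow> nat \<Rightarrow> 'w \<Rightarrow> 'b"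
    and x0 :: "'n \<Rightarrow> 'a" and \<alpha> \<eta>\<phi> L\<phi> cz :: real and L :: "'n \<Rightarrow> real" and S :: "nat \<Rightarrow> nat"
  assumes r_proper: "\<forall>i x. r i x \<noteq> -\<infinity>"
    and r_lsc: "\<forall>i. lsc_fun (r i)"
    and r_convex: "\<forall>i. econvex (r i)"
    and r_compact: "\<forall>i. compact (edom (r i))"
    and x0_in: "\<forall>i. x0 i \<in> edom (r i)"
    and xs_in: "\<forall>i. xs i \<in> edom (r i)"
    and xs_NE: "\<forall>i y. ereal (f i (xs i) (\<Sum>j\<in>UNIV. xs j)) + r i (xs i)
                     \<le> ereal (f i y (y + others xs i)) + r i y"
    and phi_grad_xs: "\<forall>i. ((\<lambda>y. f i y (y + others xs i)) has_derivative (\<lambda>h. \<phi> i xs \<bullet> h)) (at (xs i))"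
    and F_phi: "\<forall>x\<in>{x. \<forall>i. x i \<in> edom (r i)}. \<forall>i. F i (x i) (\<Sum>j\<in>UNIV. x j) = \<phi> i x"
    and phi_strmono: "\<forall>x\<in>{x. \<forall>i. x i \<in> edom (r i)}. \<forall>y\<in>{x. \<forall>i. x i \<in> edom (r i)}.
          (\<Sum>i\<in>UNIV. (\<phi> i x - \<phi> i y) \<bullet> (x i - y i)) \<ge> \<eta>\<phi> * sq_dist x y"
    and phi_lip: "\<forall>x\<in>{x. \<forall>i. x i \<in> edom (r i)}. \<forall>y\<in>{x. \<forall>i. x i \<in> edom (r i)}.
          sqrt (sq_dist (\<lambda>i. \<phi> i x) (\<lambda>i. \<phi> i y)) \<le> L\<phi> * sqrt (sq_dist x y)"
    and A_geom: "\<forall>k\<ge>1. \<forall>i j. \<bar>matpow A k i j - 1 / real CARD('n)\<bar> \<le> \<theta> * \<beta> ^ k"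
    and theta_pos: "\<theta> > 0" and beta: "0 < \<beta>" "\<beta> < 1"
    and alpha_pos: "\<alpha> > 0"
    and M_prob: "prob_space M"
    and P_prob: "\<forall>i. prob_space (P i)"
    and xi_meas: "\<forall>i k p. \<xi> i k p \<in> measurable M (P i)"
    and G_meas: "\<forall>i. (\<lambda>(y, z, s). G i y z s) \<in> borel_measurable (borel \<Otimes>\<^sub>M (borel \<Otimes>\<^sub>M P i))"
    and G_unbiased: "\<forall>i. \<forall>y\<in>edom (r i). \<forall>z. integrable (P i) (G i y z) \<and> (\<integral>s. G i y z s \<partial>P i) = F i y z"
    and cz_bound: "\<forall>k i. \<forall>\<omega>\<in>space M.
          norm (real CARD('n) *\<^sub>R vs_vhat \<alpha> A r G S Suc \<xi> x0 k \<omega> i) \<le> cz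
          \<and> norm (\<Sum>j\<in>UNIV. vs_x \<alpha> A r G S Suc \<xi> x0 k \<omega> j) \<le> cz"
    and cz_pos: "cz > 0"
    and F_lip: "\<forall>i. \<forall>y\<in>edom (r i). \<forall>z1 z2. norm z1 \<le> cz \<longrightarrow> norm z2 \<le> cz \<longrightarrow>
          norm (F i y z1 - F i y z2) \<le> L i * norm (z1 - z2)"
begin

abbreviation "X \<equiv> vs_x \<alpha> A r G S Suc \<xi> x0"
abbreviation "V k \<omega> \<equiv> snd (vspgr \<alpha> A r G S Suc \<xi> x0 k \<omega>)"
abbreviation "Vh \<equiv> vs_vhat \<alpha> A r G S Suc \<xi> x0"
abbreviation "e \<equiv> vs_err \<alpha> A r G F S Suc \<xi> x0"

definition radius :: "'n \<Rightarrow> real" where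
  "radius i = Sup (norm ` edom (r i))"

definition gradient_sample_mean :: "nat \<Rightarrow> 'n \<Rightarrow> 'w \<Rightarrow> 'a" where
  "gradient_sample_mean k i \<omega> = (1 / real (S k)) *\<^sub>R
     (\<Sum>p\<in>{1..S k}. G i (X k \<omega> i) (real CARD('n) *\<^sub>R Vh k \<omega> i) (\<xi> i k p \<omega>))"

lemma X_0: "X 0 \<omega> = x0" and V_0: "V 0 \<omega> = x0"
  by (simp_all add: vs_x_def)

lemma Vh_eq: "Vh k \<omega> = (mix A ^^ (k + 1)) (V k \<omega>)"
  by (simp add: vs_vhat_def)

lemma X_Suc: "X (Suc k) \<omega> i = prox \<alpha> (r i) (X k \<omega> i - \<alpha> *\<^sub>R gradient_sample_mean k i \<omega>)"
  by (simp add: vs_x_def vs_vhat_def gradient_sample_mean_def Let_def)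

lemma V_Suc: "V (Suc k) \<omega> = (\<lambda>i. Vh k \<omega> i + X (Suc k) \<omega> i - X k \<omega> i)"
  by (simp add: vs_x_def vs_vhat_def Let_def)

lemma err_eq: "e k i \<omega> = gradient_sample_mean k i \<omega> - F i (X k \<omega> i) (real CARD('n) *\<^sub>R Vh k \<omega> i)"
  by (simp add: vs_err_def gradient_sample_mean_def Let_def)

lemma edom_nonempty: "edom (r i) \<noteq> {}"
  using x0_in by blast

lemma X_in_edom: "X k \<omega> i \<in> edom (r i)"
proof (induction k arbitrary: i)
  case 0 then show ?case using x0_in by (simp add: X_0)
next
  case (Suc k) then show ?case
    unfolding X_Suc using r_proper r_lsc r_compact edom_nonempty by (intro prox_in_edom) auto
qed

lemma norm_le_radius: "y \<in> edom (r i) \<Longrightarrow> norm y \<le> radius i"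
  unfolding radius_def using r_compact
  by (intro cSup_upper bounded_imp_bdd_above compact_imp_bounded compact_continuous_image)
    (auto intro: continuous_intros)

definition total_radius :: real where
  "total_radius = (\<Sum>i\<in>UNIV. radius i)"

definition tracking_bound :: "nat \<Rightarrow> real" where
  "tracking_bound k = real CARD('n) * \<theta> * (2 * total_radius) * (\<beta> ^ (k + 1) / (1 - \<beta>))"

lemma radius_le_total_radius: "0 \<le> radius i" "radius i \<le> total_radius"
proof -
  show nonneg: "0 \<le> radius j" for j
    using norm_le_radius[OF X_in_edom[of 0 undefined j]] norm_ge_zero order.trans by blast
  show "radius i \<le> total_radius"
    unfolding total_radius_def using nonneg by (intro member_le_sum) auto
qed

lemma total_radius_nonneg: "0 \<le> total_radius"
  using radius_le_total_radius order.trans by blast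

lemma norm_diff_xs_le: "norm (X k \<omega> i - xs i) \<le> 2 * total_radius"
proof -
  have "norm (X k \<omega> i - xs i) \<le> radius i + radius i"
    using norm_triangle_ineq4[of "X k \<omega> i" "xs i"] norm_le_radius[OF X_in_edom, of k \<omega> i]
      norm_le_radius[of "xs i" i] xs_in by simp
  then show ?thesis using radius_le_total_radius[of i] by simp
qed

lemma tracking_error: "norm (real CARD('n) *\<^sub>R Vh k \<omega> i - (\<Sum>j\<in>UNIV. X k \<omega> j)) \<le> tracking_bound k"
  unfolding tracking_bound_def Vh_eq
proof (rule tracking_error_le[OF A_geom beta])
  show "0 \<le> \<theta>" using theta_pos by simp
  show "V 0 \<omega> = X 0 \<omega>" by (simp add: X_0 V_0)
  show "\<forall>k. V (Suc k) \<omega> = (\<lambda>i. (mix A ^^ (k + 1)) (V k \<omega>) i + X (Suc k) \<omega> i - X k \<omega> i)"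
    by (simp del: vspgr.simps add: V_Suc Vh_eq)
  show "\<forall>k. (\<Sum>j\<in>UNIV. norm (X k \<omega> j)) \<le> total_radius"
    unfolding total_radius_def by (intro allI sum_mono norm_le_radius X_in_edom)
qed

lemma L_nonneg: "0 \<le> L i"
proof -
  obtain b :: 'a where "b \<in> Basis" using nonempty_Basis by blast
  then have "norm (cz *\<^sub>R b) = cz" using cz_pos by simp
  have "\<forall>z1 z2. norm z1 \<le> cz \<longrightarrow> norm z2 \<le> cz \<longrightarrow>
      norm (F i (x0 i) z1 - F i (x0 i) z2) \<le> L i * norm (z1 - z2)"
    using F_lip x0_in by blast
  from this[rule_format, of 0 "cz *\<^sub>R b"]
  have "norm (F i (x0 i) 0 - F i (x0 i) (cz *\<^sub>R b)) \<le> L i * cz"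
    using cz_pos \<open>norm (cz *\<^sub>R b) = cz\<close> by simp
  then show ?thesis using cz_pos by (meson norm_ge_zero order.trans zero_le_mult_iff not_le)
qed

lemma bias_le:
  assumes "\<omega> \<in> space M"
  shows "norm (F i (X k \<omega> i) (real CARD('n) *\<^sub>R Vh k \<omega> i) - \<phi> i (X k \<omega>)) \<le> L i * tracking_bound k"
proof -
  have "\<phi> i (X k \<omega>) = F i (X k \<omega> i) (\<Sum>j\<in>UNIV. X k \<omega> j)"
    using F_phi X_in_edom by simp
  then have "norm (F i (X k \<omega> i) (real CARD('n) *\<^sub>R Vh k \<omega> i) - \<phi> i (X k \<omega>))
      \<le> L i * norm (real CARD('n) *\<^sub>R Vh k \<omega> i - (\<Sum>j\<in>UNIV. X k \<omega> j))"
    using F_lip X_in_edom cz_bound assms by simp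
  also have "\<dots> \<le> L i * tracking_bound k"
    using tracking_error L_nonneg by (rule mult_left_mono)
  finally show ?thesis .
qed

lemma equilibrium_is_prox_point: "is_prox_point (r i) \<alpha> (xs i - \<alpha> *\<^sub>R \<phi> i xs) (xs i)"
proof (rule minimizer_is_prox_point)
  show "\<forall>y. ereal (f i (xs i) (xs i + others xs i)) + r i (xs i) \<le> ereal (f i y (y + others xs i)) + r i y"
    using xs_NE by (simp add: add_others)
qed (use r_proper r_convex xs_in phi_grad_xs alpha_pos in auto)

lemma player_step_le:
  fixes k :: nat and \<omega> :: 'w and i :: 'n
  assumes "\<omega> \<in> space M"
  defines "x \<equiv> X k \<omega>"
  shows "norm (X (Suc k) \<omega> i - xs i)^2 \<le> (1 + \<alpha>^2) * norm (x i - xs i)^2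
     - 2 * \<alpha> * inner (\<phi> i x - \<phi> i xs) (x i - xs i) + (1 + 2 * \<alpha>^2) * norm (e k i \<omega>)^2
     + 4 * \<alpha>^2 * norm (\<phi> i x - \<phi> i xs)^2
     + 4 * \<alpha> * total_radius * tracking_bound k * L i + 4 * \<alpha>^2 * (tracking_bound k)^2 * (L i)^2"
proof -
  define d where "d = F i (x i) (real CARD('n) *\<^sub>R Vh k \<omega> i) - \<phi> i x"
  have "norm (X (Suc k) \<omega> i - xs i) \<le> norm ((x i - \<alpha> *\<^sub>R gradient_sample_mean k i \<omega>) - (xs i - \<alpha> *\<^sub>R \<phi> i xs))"
    unfolding X_Suc x_def using r_proper r_lsc r_compact edom_nonempty r_convex alpha_pos
    by (intro is_prox_point_nonexpansive[OF prox_is_prox_point equilibrium_is_prox_point]) auto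
  also have "(x i - \<alpha> *\<^sub>R gradient_sample_mean k i \<omega>) - (xs i - \<alpha> *\<^sub>R \<phi> i xs)
      = (x i - xs i) - \<alpha> *\<^sub>R ((\<phi> i x - \<phi> i xs) + e k i \<omega> + d)"
    unfolding err_eq d_def x_def by (simp add: algebra_simps)
  finally have "norm (X (Suc k) \<omega> i - xs i)^2 \<le> norm ((x i - xs i) - \<alpha> *\<^sub>R ((\<phi> i x - \<phi> i xs) + e k i \<omega> + d))^2"
    by (simp add: power_mono)
  also have "\<dots> \<le> (1 + \<alpha>^2) * norm (x i - xs i)^2 - 2 * \<alpha> * inner (x i - xs i) (\<phi> i x - \<phi> i xs)
      + (1 + 2 * \<alpha>^2) * norm (e k i \<omega>)^2 + 4 * \<alpha>^2 * norm (\<phi> i x - \<phi> i xs)^2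
      + 2 * \<alpha> * (norm (x i - xs i) * norm d) + 4 * \<alpha>^2 * norm d^2"
    using alpha_pos by (intro perturbed_gradient_step_le) simp
  also have "2 * \<alpha> * (norm (x i - xs i) * norm d) \<le> 2 * \<alpha> * ((2 * total_radius) * (L i * tracking_bound k))"
    using norm_diff_xs_le bias_le[OF assms(1)] alpha_pos total_radius_nonneg
    unfolding d_def x_def by (intro mult_left_mono mult_mono) auto
  also have "4 * \<alpha>^2 * norm d^2 \<le> 4 * \<alpha>^2 * (L i * tracking_bound k)^2"
    using bias_le[OF assms(1)] unfolding d_def x_def by (intro mult_left_mono power_mono) auto
  finally show ?thesis
    by (simp add: inner_commute power_mult_distrib algebra_simps)
qed

lemma sq_dist_step_le:
  assumes "\<omega> \<in> space M"
  shows "sq_dist (X (Suc k) \<omega>) xs \<le> (1 + \<alpha>^2 - 2 * \<alpha> * \<eta>\<phi> + 4 * \<alpha>^2 * L\<phi>^2) * sq_dist (X k \<omega>) xs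
     + (1 + 2 * \<alpha>^2) * (\<Sum>i\<in>UNIV. norm (e k i \<omega>)^2)
     + 4 * \<alpha> * total_radius * tracking_bound k * (\<Sum>i\<in>UNIV. L i)
     + 4 * \<alpha>^2 * (tracking_bound k)^2 * (\<Sum>i\<in>UNIV. (L i)^2)"
proof -
  define x where "x = X k \<omega>"
  have x: "x \<in> {x. \<forall>i. x i \<in> edom (r i)}" and xs: "xs \<in> {x. \<forall>i. x i \<in> edom (r i)}"
    unfolding x_def using X_in_edom xs_in by auto
  have "sq_dist (X (Suc k) \<omega>) xs \<le> (1 + \<alpha>^2) * sq_dist x xs
      - 2 * \<alpha> * (\<Sum>i\<in>UNIV. inner (\<phi> i x - \<phi> i xs) (x i - xs i))
      + (1 + 2 * \<alpha>^2) * (\<Sum>i\<in>UNIV. norm (e k i \<omega>)^2)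
      + 4 * \<alpha>^2 * sq_dist (\<lambda>i. \<phi> i x) (\<lambda>i. \<phi> i xs)
      + 4 * \<alpha> * total_radius * tracking_bound k * (\<Sum>i\<in>UNIV. L i)
      + 4 * \<alpha>^2 * (tracking_bound k)^2 * (\<Sum>i\<in>UNIV. (L i)^2)"
    using sum_mono[of UNIV, OF player_step_le[OF assms, of k]]
    unfolding sq_dist_def x_def
    by (simp add: sum.distrib sum_subtractf sum_distrib_left)
  moreover have "\<eta>\<phi> * sq_dist x xs \<le> (\<Sum>i\<in>UNIV. inner (\<phi> i x - \<phi> i xs) (x i - xs i))"
    using phi_strmono x xs by blast
  then have "2 * \<alpha> * (\<eta>\<phi> * sq_dist x xs) \<le> 2 * \<alpha> * (\<Sum>i\<in>UNIV. inner (\<phi> i x - \<phi> i xs) (x i - xs i))"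
    using alpha_pos by (intro mult_left_mono) auto
  moreover have "sq_dist (\<lambda>i. \<phi> i x) (\<lambda>i. \<phi> i xs) \<le> L\<phi>^2 * sq_dist x xs"
    using phi_lip x xs by (intro le_power2_mult_if_sqrt_le sq_dist_nonneg) auto
  then have "4 * \<alpha>^2 * sq_dist (\<lambda>i. \<phi> i x) (\<lambda>i. \<phi> i xs) \<le> 4 * \<alpha>^2 * (L\<phi>^2 * sq_dist x xs)"
    by (intro mult_left_mono) auto
  moreover have "(1 + \<alpha>^2 - 2 * \<alpha> * \<eta>\<phi> + 4 * \<alpha>^2 * L\<phi>^2) * sq_dist x xs
      = (1 + \<alpha>^2) * sq_dist x xs - 2 * \<alpha> * (\<eta>\<phi> * sq_dist x xs) + 4 * \<alpha>^2 * (L\<phi>^2 * sq_dist x xs)"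
    by (simp add: algebra_simps)
  ultimately show ?thesis
    unfolding x_def by linarith
qed


lemma gradient_sample_mean_measurable:
  assumes "(\<lambda>\<omega>. X k \<omega> i) \<in> borel_measurable M" "(\<lambda>\<omega>. Vh k \<omega> i) \<in> borel_measurable M"
  shows "gradient_sample_mean k i \<in> borel_measurable M"
proof -
  have "(\<lambda>\<omega>. G i (X k \<omega> i) (real CARD('n) *\<^sub>R Vh k \<omega> i) (\<xi> i k p \<omega>)) \<in> borel_measurable M" for p
  proof -
    have "(\<lambda>\<omega>. (X k \<omega> i, real CARD('n) *\<^sub>R Vh k \<omega> i, \<xi> i k p \<omega>)) \<in> M \<rightarrow>\<^sub>M borel \<Otimes>\<^sub>M (borel \<Otimes>\<^sub>M P i)"
      using assms xi_meas by (intro measurable_Pair borel_measurable_scaleR) auto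
    from measurable_compose[OF this G_meas[rule_format, of i]] show ?thesis by simp
  qed
  then show ?thesis
    unfolding gradient_sample_mean_def by (intro borel_measurable_scaleR borel_measurable_sum) auto
qed

lemma X_V_measurable:
  "(\<lambda>\<omega>. X k \<omega> i) \<in> borel_measurable M \<and> (\<lambda>\<omega>. V k \<omega> i) \<in> borel_measurable M"
proof (induction k arbitrary: i)
  case 0
  show ?case by (simp add: X_0 V_0)
next
  case (Suc k)
  have Vh: "(\<lambda>\<omega>. Vh k \<omega> j) \<in> borel_measurable M" for j
    unfolding Vh_eq funpow_mix_apply using Suc by (intro borel_measurable_sum borel_measurable_scaleR) auto
  have "(\<lambda>\<omega>. gradient_sample_mean k j \<omega>) \<in> borel_measurable M" for j
    using Suc Vh by (intro gradient_sample_mean_measurable) auto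
  then have "(\<lambda>\<omega>. X k \<omega> j - \<alpha> *\<^sub>R gradient_sample_mean k j \<omega>) \<in> borel_measurable M" for j
    using Suc by (intro borel_measurable_diff borel_measurable_scaleR) auto
  moreover have "prox \<alpha> (r j) \<in> borel_measurable borel" for j
    using r_proper r_lsc r_compact edom_nonempty r_convex alpha_pos
    by (intro borel_measurable_continuous_onI continuous_on_prox) auto
  ultimately have X: "(\<lambda>\<omega>. X (Suc k) \<omega> j) \<in> borel_measurable M" for j
    unfolding X_Suc by (rule measurable_compose)
  moreover have "(\<lambda>\<omega>. Vh k \<omega> i + X (Suc k) \<omega> i - X k \<omega> i) \<in> borel_measurable M"
    using X Vh Suc by (intro borel_measurable_add borel_measurable_diff) auto
  ultimately show ?case
    by (simp del: vspgr.simps add: V_Suc)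
qed

lemma X_measurable: "(\<lambda>\<omega>. X k \<omega> i) \<in> borel_measurable M"
  using X_V_measurable by blast

lemma Vh_measurable: "(\<lambda>\<omega>. Vh k \<omega> i) \<in> borel_measurable M"
  unfolding Vh_eq funpow_mix_apply using X_V_measurable
  by (intro borel_measurable_sum borel_measurable_scaleR) auto

lemma F_iterate_measurable:
  "(\<lambda>\<omega>. F i (X k \<omega> i) (real CARD('n) *\<^sub>R Vh k \<omega> i)) \<in> borel_measurable M"
proof -
  have "(\<lambda>(\<omega>, s). G i (X k \<omega> i) (real CARD('n) *\<^sub>R Vh k \<omega> i) s) \<in> borel_measurable (M \<Otimes>\<^sub>M P i)"
  proof -
    have "(\<lambda>(\<omega>, s). (X k \<omega> i, real CARD('n) *\<^sub>R Vh k \<omega> i, s)) \<in> M \<Otimes>\<^sub>M P i \<rightarrow>\<^sub>M borel \<Otimes>\<^sub>M (borel \<Otimes>\<^sub>M P i)"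
      using X_measurable Vh_measurable by (auto intro!: measurable_Pair borel_measurable_scaleR
          measurable_compose[OF measurable_fst] simp: split_beta')
    from measurable_compose[OF this G_meas[rule_format, of i]] show ?thesis
      by (simp add: split_beta')
  qed
  then have "(\<lambda>\<omega>. \<integral>s. G i (X k \<omega> i) (real CARD('n) *\<^sub>R Vh k \<omega> i) s \<partial>P i) \<in> borel_measurable M"
    using P_prob prob_space_imp_sigma_finite
    by (intro sigma_finite_measure.borel_measurable_lebesgue_integral) auto
  moreover have "(\<integral>s. G i (X k \<omega> i) (real CARD('n) *\<^sub>R Vh k \<omega> i) s \<partial>P i)
      = F i (X k \<omega> i) (real CARD('n) *\<^sub>R Vh k \<omega> i)" for \<omega>
    using G_unbiased X_in_edom by simp
  ultimately show ?thesis by simp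
qed

lemma err_measurable: "e k i \<in> borel_measurable M"
  unfolding err_eq[abs_def]
  using gradient_sample_mean_measurable[OF X_measurable Vh_measurable] F_iterate_measurable
  by (intro borel_measurable_diff) auto


lemma sq_dist_integrable: "integrable M (\<lambda>\<omega>. sq_dist (X k \<omega>) xs)"
proof -
  interpret prob_space M by (rule M_prob)
  show ?thesis
  proof (rule integrable_const_bound)
    have "sq_dist (X k \<omega>) xs \<le> (\<Sum>i\<in>(UNIV :: 'n set). (2 * total_radius)^2)" for \<omega>
      unfolding sq_dist_def by (intro sum_mono power_mono norm_diff_xs_le) simp
    then show "AE \<omega> in M. norm (sq_dist (X k \<omega>) xs) \<le> real CARD('n) * (2 * total_radius)^2"
      by (intro AE_I2) (simp add: abs_of_nonneg sq_dist_nonneg)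
    show "(\<lambda>\<omega>. sq_dist (X k \<omega>) xs) \<in> borel_measurable M"
      unfolding sq_dist_def using X_measurable by measurable
  qed
qed

lemma variance_bound_integrable:
  "integrable M (\<lambda>\<omega>. (a^2 * norm (X k \<omega> i)^2 + b^2) / real (S k))"
proof -
  interpret prob_space M by (rule M_prob)
  show ?thesis
  proof (rule integrable_const_bound)
    have "a^2 * norm (X k \<omega> i)^2 \<le> a^2 * (radius i)^2" for \<omega>
      using norm_le_radius[OF X_in_edom] by (intro mult_left_mono power_mono) auto
    then have "norm ((a^2 * norm (X k \<omega> i)^2 + b^2) / real (S k)) \<le> (a^2 * (radius i)^2 + b^2) / real (S k)"
      for \<omega> by (simp add: divide_right_mono)
    then show "AE \<omega> in M. norm ((a^2 * norm (X k \<omega> i)^2 + b^2) / real (S k))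
        \<le> (a^2 * (radius i)^2 + b^2) / real (S k)"
      by (rule AE_I2)
    show "(\<lambda>\<omega>. (a^2 * norm (X k \<omega> i)^2 + b^2) / real (S k)) \<in> borel_measurable M"
      using X_measurable by measurable
  qed
qed

lemma expected_err_le:
  fixes a b :: real
  assumes "AE \<omega> in M. nn_cond_exp M (nat_filt M X k) (\<lambda>\<omega>. ennreal ((norm (e k i \<omega>))\<^sup>2)) \<omega>
            \<le> ennreal ((a\<^sup>2 * (norm (X k \<omega> i))\<^sup>2 + b\<^sup>2) / real (S k))"
  shows "integrable M (\<lambda>\<omega>. norm (e k i \<omega>)^2)"
    and "(\<integral>\<omega>. norm (e k i \<omega>)^2 \<partial>M) \<le> (\<integral>\<omega>. (a^2 * norm (X k \<omega> i)^2 + b^2) / real (S k) \<partial>M)"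
proof -
  interpret prob_space M by (rule M_prob)
  interpret finite_measure_subalgebra M "nat_filt M X k"
    by unfold_locales (use subalgebra_nat_filt X_measurable in blast)
  have "integrable M (\<lambda>\<omega>. (a^2 * norm (X k \<omega> i)^2 + b^2) / real (S k))"
    by (rule variance_bound_integrable)
  moreover have "(\<lambda>\<omega>. norm (e k i \<omega>)^2) \<in> borel_measurable M"
    using measurable_compose[OF err_measurable borel_measurable_norm] by (intro borel_measurable_power)
  ultimately show "integrable M (\<lambda>\<omega>. norm (e k i \<omega>)^2)"
    and "(\<integral>\<omega>. norm (e k i \<omega>)^2 \<partial>M) \<le> (\<integral>\<omega>. (a^2 * norm (X k \<omega> i)^2 + b^2) / real (S k) \<partial>M)"
    by (intro integral_le_if_nn_cond_exp_le[OF sigma_finite_subalgebra_axioms _ _ _ _ assms]; simp)+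
qed

lemma sampling_variance_le:
  fixes \<nu>1 \<nu>2 :: "'n \<Rightarrow> real" and \<nu>1b \<rho> :: real
  assumes \<nu>1: "\<forall>i. 0 \<le> \<nu>1 i \<and> \<nu>1 i \<le> \<nu>1b"
    and S: "1 / real (S k) \<le> \<alpha>^2 * \<rho> ^ (k + 1)" and \<rho>: "0 \<le> \<rho>" "\<rho> \<le> 1"
  shows "(1 + 2 * \<alpha>^2) * (\<Sum>i\<in>UNIV. ((\<nu>1 i)^2 * norm (X k \<omega> i)^2 + (\<nu>2 i)^2) / real (S k))
    \<le> 2 * \<alpha>^2 * (1 + 2 * \<alpha>^2) * \<nu>1b^2 * sq_dist (X k \<omega>) xs
      + \<alpha>^2 * ((1 + 2 * \<alpha>^2) * (2 * \<nu>1b^2 * sq_norm xs + (\<Sum>i\<in>UNIV. (\<nu>2 i)^2))) * \<rho> ^ (k + 1)"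
proof -
  define \<kappa> where "\<kappa> = 2 * \<alpha>^2 * (1 + 2 * \<alpha>^2) * \<nu>1b^2"
  have "(1 + 2 * \<alpha>^2) * (\<Sum>i\<in>UNIV. ((\<nu>1 i)^2 * norm (X k \<omega> i)^2 + (\<nu>2 i)^2) / real (S k))
      \<le> (1 + 2 * \<alpha>^2) * ((2 * \<nu>1b^2 * sq_dist (X k \<omega>) xs + 2 * \<nu>1b^2 * sq_norm xs
          + (\<Sum>i\<in>UNIV. (\<nu>2 i)^2)) * (\<alpha>^2 * \<rho> ^ (k + 1)))"
    using \<nu>1 S by (intro mult_left_mono sum_variance_le) auto
  also have "\<dots> = \<kappa> * sq_dist (X k \<omega>) xs * \<rho> ^ (k + 1)
      + \<alpha>^2 * ((1 + 2 * \<alpha>^2) * (2 * \<nu>1b^2 * sq_norm xs + (\<Sum>i\<in>UNIV. (\<nu>2 i)^2))) * \<rho> ^ (k + 1)"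
    unfolding \<kappa>_def by (simp add: algebra_simps)
  also have "\<kappa> * sq_dist (X k \<omega>) xs * \<rho> ^ (k + 1) \<le> \<kappa> * sq_dist (X k \<omega>) xs"
    using \<rho> sq_dist_nonneg[of "X k \<omega>" xs] unfolding \<kappa>_def
    by (intro mult_left_le power_le_one) (auto intro!: mult_nonneg_nonneg)
  finally show ?thesis unfolding \<kappa>_def by simp
qed

lemma expected_sq_dist_step_le:
  fixes \<nu>1 \<nu>2 :: "'n \<Rightarrow> real" and \<nu>1b \<rho> :: real
  assumes err_var: "\<forall>i. AE \<omega> in M. nn_cond_exp M (nat_filt M X k) (\<lambda>\<omega>. ennreal ((norm (e k i \<omega>))\<^sup>2)) \<omega>
            \<le> ennreal (((\<nu>1 i)\<^sup>2 * (norm (X k \<omega> i))\<^sup>2 + (\<nu>2 i)\<^sup>2) / real (S k))"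
    and \<nu>1: "\<forall>i. 0 \<le> \<nu>1 i \<and> \<nu>1 i \<le> \<nu>1b"
    and S: "1 / real (S k) \<le> \<alpha>^2 * \<rho> ^ (k + 1)" and \<rho>: "0 \<le> \<rho>" "\<rho> \<le> 1"
  shows "(\<integral>\<omega>. sq_dist (X (Suc k) \<omega>) xs \<partial>M)
     \<le> (1 - 2 * \<alpha> * \<eta>\<phi> + 2 * \<alpha>^2 * (1/2 + (1 + 2 * \<alpha>^2) * \<nu>1b^2 + 2 * L\<phi>^2))
          * (\<integral>\<omega>. sq_dist (X k \<omega>) xs \<partial>M)
       + \<alpha>^2 * ((1 + 2 * \<alpha>^2) * (2 * \<nu>1b^2 * sq_norm xs + (\<Sum>i\<in>UNIV. (\<nu>2 i)^2))) * \<rho> ^ (k + 1)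
       + 4 * \<alpha> * total_radius * tracking_bound k * (\<Sum>i\<in>UNIV. L i)
       + 4 * \<alpha>^2 * (tracking_bound k)^2 * (\<Sum>i\<in>UNIV. (L i)^2)"
proof -
  interpret prob_space M by (rule M_prob)
  define U where "U k \<omega> = sq_dist (X k \<omega>) xs" for k \<omega>
  define B where "B i \<omega> = ((\<nu>1 i)^2 * norm (X k \<omega> i)^2 + (\<nu>2 i)^2) / real (S k)" for i \<omega>
  define c0 where "c0 = 1 + \<alpha>^2 - 2 * \<alpha> * \<eta>\<phi> + 4 * \<alpha>^2 * L\<phi>^2"
  define \<kappa> where "\<kappa> = 2 * \<alpha>^2 * (1 + 2 * \<alpha>^2) * \<nu>1b^2"
  define \<sigma> where "\<sigma> = \<alpha>^2 * ((1 + 2 * \<alpha>^2) * (2 * \<nu>1b^2 * sq_norm xs + (\<Sum>i\<in>UNIV. (\<nu>2 i)^2)))"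
  define T where "T = 4 * \<alpha> * total_radius * tracking_bound k * (\<Sum>i\<in>UNIV. L i)
       + 4 * \<alpha>^2 * (tracking_bound k)^2 * (\<Sum>i\<in>UNIV. (L i)^2)"
  note err = expected_err_le[OF err_var[rule_format]]
  have B_int: "integrable M (B i)" for i
    unfolding B_def by (rule variance_bound_integrable)
  have "(\<integral>\<omega>. U (Suc k) \<omega> \<partial>M) \<le> (\<integral>\<omega>. c0 * U k \<omega> + (1 + 2 * \<alpha>^2) * (\<Sum>i\<in>UNIV. norm (e k i \<omega>)^2) + T \<partial>M)"
    using sq_dist_integrable err(1) sq_dist_step_le unfolding U_def c0_def T_def
    by (intro integral_mono) (auto simp: add.assoc)
  also have "\<dots> = c0 * (\<integral>\<omega>. U k \<omega> \<partial>M) + (1 + 2 * \<alpha>^2) * (\<Sum>i\<in>UNIV. \<integral>\<omega>. norm (e k i \<omega>)^2 \<partial>M) + T"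
    using sq_dist_integrable err(1) unfolding U_def by (simp add: prob_space)
  also have "\<dots> \<le> c0 * (\<integral>\<omega>. U k \<omega> \<partial>M) + (1 + 2 * \<alpha>^2) * (\<Sum>i\<in>UNIV. \<integral>\<omega>. B i \<omega> \<partial>M) + T"
    using err(2) unfolding B_def by (intro add_mono mult_left_mono sum_mono order_refl) auto
  also have "\<dots> = c0 * (\<integral>\<omega>. U k \<omega> \<partial>M) + (\<integral>\<omega>. (1 + 2 * \<alpha>^2) * (\<Sum>i\<in>UNIV. B i \<omega>) \<partial>M) + T"
    using B_int by simp
  also have "\<dots> \<le> c0 * (\<integral>\<omega>. U k \<omega> \<partial>M) + (\<integral>\<omega>. \<kappa> * U k \<omega> + \<sigma> * \<rho> ^ (k + 1) \<partial>M) + T"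
    using sampling_variance_le[OF \<nu>1 S \<rho>] B_int sq_dist_integrable
    unfolding U_def B_def \<kappa>_def \<sigma>_def by (intro add_mono order_refl integral_mono) auto
  also have "\<dots> = (c0 + \<kappa>) * (\<integral>\<omega>. U k \<omega> \<partial>M) + \<sigma> * \<rho> ^ (k + 1) + T"
    using sq_dist_integrable unfolding U_def by (simp add: prob_space algebra_simps)
  finally show ?thesis
    unfolding U_def c0_def \<kappa>_def \<sigma>_def T_def by (simp add: algebra_simps)
qed

lemma expected_sq_dist_contraction:
  fixes \<nu>1 \<nu>2 :: "'n \<Rightarrow> real" and \<nu>1b \<rho> \<gamma> :: real
  defines "C1 \<equiv> \<theta> * total_radius" and "C2 \<equiv> 2 * \<theta> * total_radius * tracking_const \<beta>"
  assumes err_var: "\<forall>i. AE \<omega> in M. nn_cond_exp M (nat_filt M X k) (\<lambda>\<omega>. ennreal ((norm (e k i \<omega>))\<^sup>2)) \<omega>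
            \<le> ennreal (((\<nu>1 i)\<^sup>2 * (norm (X k \<omega> i))\<^sup>2 + (\<nu>2 i)\<^sup>2) / real (S k))"
    and \<nu>1: "\<forall>i. 0 \<le> \<nu>1 i \<and> \<nu>1 i \<le> \<nu>1b"
    and S: "S k = nat \<lceil>(1 / \<alpha>^2) * (1 / \<rho>) ^ (k + 1)\<rceil>" and \<rho>: "0 < \<rho>" "\<rho> < 1"
    and \<gamma>: "\<gamma> = max \<rho> \<beta>"
  shows "(\<integral>\<omega>. sq_dist (X (Suc k) \<omega>) xs \<partial>M)
     \<le> (1 - 2 * \<alpha> * \<eta>\<phi> + 2 * \<alpha>^2 * (1/2 + (1 + 2 * \<alpha>^2) * \<nu>1b^2 + 2 * L\<phi>^2))
          * (\<integral>\<omega>. sq_dist (X k \<omega>) xs \<partial>M)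
       + (\<alpha>^2 * ((1 + 2 * \<alpha>^2) * (2 * \<nu>1b^2 * sq_norm xs + (\<Sum>i\<in>UNIV. (\<nu>2 i)^2)))
          + 4 * \<alpha> * real CARD('n) * total_radius * (C1 + C2) * (\<Sum>i\<in>UNIV. L i)
          + 4 * \<alpha>^2 * (real CARD('n))^2 * \<beta> * (C1^2 + C2^2) * (\<Sum>i\<in>UNIV. (L i)^2)) * \<gamma> ^ (k + 1)"
proof -
  have tracking: "tracking_bound k \<le> real CARD('n) * (C1 + C2) * \<gamma> ^ (k + 1)"
    "(tracking_bound k)^2 \<le> (real CARD('n))^2 * \<beta> * (C1^2 + C2^2) * \<gamma> ^ (k + 1)"
    unfolding tracking_bound_def C1_def C2_def
    using theta_pos beta total_radius_nonneg two_div_one_minus_le_tracking_const[OF beta] \<gamma>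
    by (intro tracking_bound_le; simp)+
  have "\<alpha>^2 * ((1 + 2 * \<alpha>^2) * (2 * \<nu>1b^2 * sq_norm xs + (\<Sum>i\<in>UNIV. (\<nu>2 i)^2))) * \<rho> ^ (k + 1)
      \<le> \<alpha>^2 * ((1 + 2 * \<alpha>^2) * (2 * \<nu>1b^2 * sq_norm xs + (\<Sum>i\<in>UNIV. (\<nu>2 i)^2))) * \<gamma> ^ (k + 1)"
    using \<rho> \<gamma> by (intro mult_left_mono power_mono) (auto simp: sq_norm_def sum_nonneg)
  moreover have "4 * \<alpha> * total_radius * tracking_bound k * (\<Sum>i\<in>UNIV. L i)
      \<le> 4 * \<alpha> * total_radius * (real CARD('n) * (C1 + C2) * \<gamma> ^ (k + 1)) * (\<Sum>i\<in>UNIV. L i)"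
    using tracking(1) alpha_pos total_radius_nonneg L_nonneg
    by (intro mult_right_mono mult_left_mono) (auto intro: sum_nonneg)
  moreover have "4 * \<alpha>^2 * (tracking_bound k)^2 * (\<Sum>i\<in>UNIV. (L i)^2)
      \<le> 4 * \<alpha>^2 * ((real CARD('n))^2 * \<beta> * (C1^2 + C2^2) * \<gamma> ^ (k + 1)) * (\<Sum>i\<in>UNIV. (L i)^2)"
    using tracking(2) by (intro mult_right_mono mult_left_mono) (auto intro: sum_nonneg)
  moreover note expected_sq_dist_step_le[OF err_var \<nu>1 inverse_batch_size_le[OF alpha_pos \<rho>(1) S]] \<rho>
  ultimately show ?thesis
    by (simp add: algebra_simps)
qed

end

theorem proposition2:
  fixes A :: "'n::finite \<Rightarrow> 'n \<Rightarrow> real" and Eg :: "'n \<Rightarrow> 'n \<Rightarrow> bool"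
    and \<theta> \<beta> :: real
    and r :: "'n \<Rightarrow> 'a::euclidean_space \<Rightarrow> ereal"
    and \<psi> :: "'n \<Rightarrow> 'a \<Rightarrow> 'a \<Rightarrow> 'b \<Rightarrow> real" and P :: "'n \<Rightarrow> 'b measure"
    and \<phi> :: "'n \<Rightarrow> ('n \<Rightarrow> 'a) \<Rightarrow> 'a"
    and F :: "'n \<Rightarrow> 'a \<Rightarrow> 'a \<Rightarrow> 'a" and G :: "'n \<Rightarrow> 'a \<Rightarrow> 'a \<Rightarrow> 'b \<Rightarrow> 'a"
    and xs :: "'n \<Rightarrow> 'a"
    and M :: "'w measure" and \<xi> :: "'n \<Rightarrow> nat \<Rightarrow> nat \<Rightarrow> 'w \<Rightarrow> 'b"
    and x0 :: "'n \<Rightarrow> 'a"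
    and \<alpha> \<rho> \<eta>\<phi> L\<phi> :: real and L \<nu>1 \<nu>2 :: "'n \<Rightarrow> real"
    and S :: "nat \<Rightarrow> nat"
    and \<gamma> \<nu>1b \<nu>2b_sq Lt rho_phi \<nu>b_sq DR C1 C2 C3 :: real
  defines "n \<equiv> real CARD('n)"
    and "f \<equiv> (\<lambda>i y z. \<integral>s. \<psi> i y z s \<partial>P i)"
    and "Rset \<equiv> {x. \<forall>i. x i \<in> edom (r i)}"
    and "X \<equiv> vs_x \<alpha> A r G S (\<lambda>k. k + 1) \<xi> x0"
    and "Vh \<equiv> vs_vhat \<alpha> A r G S (\<lambda>k. k + 1) \<xi> x0"
    and "e \<equiv> vs_err \<alpha> A r G F S (\<lambda>k. k + 1) \<xi> x0"
  \<comment> \<open>constants of the statement\<close>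
  assumes "\<gamma> = max \<rho> \<beta>"
    and "\<nu>1b = Max (range \<nu>1)"
    and "\<nu>2b_sq = (\<Sum>i\<in>UNIV. (\<nu>2 i)\<^sup>2)"
    and "Lt = sqrt (1/2 + (1 + 2 * \<alpha>\<^sup>2) * \<nu>1b\<^sup>2 + 2 * L\<phi>\<^sup>2)"
    and "rho_phi = 1 - 2 * \<alpha> * \<eta>\<phi> + 2 * \<alpha>\<^sup>2 * Lt\<^sup>2"
    and "\<nu>b_sq = (1 + 2 * \<alpha>\<^sup>2) * (2 * \<nu>1b\<^sup>2 * sq_norm xs + \<nu>2b_sq)"
    and "DR = (\<Sum>j\<in>UNIV. Sup (norm ` edom (r j)))"
    and "C1 = \<theta> * DR"
    and "C2 = 2 * \<theta> * DR * (exp 1 * sqrt (1 / ln (\<beta> powr (-1/2)))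
                 + (2 + ln (1 / \<beta>)) / (\<beta> powr (1/2) * ln (1 / \<beta>)))"
    and "C3 = \<alpha>\<^sup>2 * \<nu>b_sq + 4 * \<alpha> * n * DR * (C1 + C2) * (\<Sum>i\<in>UNIV. L i)
              + 4 * \<alpha>\<^sup>2 * n\<^sup>2 * \<beta> * (C1\<^sup>2 + C2\<^sup>2) * (\<Sum>i\<in>UNIV. (L i)\<^sup>2)"
  \<comment> \<open>(a) regularizers: proper, lsc, convex, compact effective domain\<close>
    and r_proper: "\<forall>i x. r i x \<noteq> -\<infinity>"
    and r_lsc: "\<forall>i. lsc_fun (r i)"
    and r_convex: "\<forall>i. econvex (r i)"
    and r_compact: "\<forall>i. compact (edom (r i))"
  \<comment> \<open>the random data xi_i and the expected-value cost f_i\<close>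
    and P_prob: "\<forall>i. prob_space (P i)"
    and psi_int: "\<forall>x\<in>Rset. \<forall>i. integrable (P i) (\<psi> i (x i) (\<Sum>j\<in>UNIV. x j))"
  \<comment> \<open>(b) phi_i is the gradient of the convex C^1 map x_i |-> f_i(x_i, x_i + xbar_{-i})\<close>
    and f_convex: "\<forall>x\<in>Rset. \<forall>i. convex_on (edom (r i)) (\<lambda>y. f i y (y + others x i))"
    and phi_grad: "\<forall>x\<in>Rset. \<forall>i.
          ((\<lambda>y. f i y (y + others x i)) has_derivative (\<lambda>h. \<phi> i x \<bullet> h)) (at (x i))"
    and phi_cont: "\<forall>x\<in>Rset. \<forall>i. continuous_on (edom (r i)) (\<lambda>y. \<phi> i (x(i := y)))"
  \<comment> \<open>(c) sample functions differentiable; G is the sampled gradient\<close>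
    and G_grad: "\<forall>x\<in>Rset. \<forall>i s.
          ((\<lambda>y. \<psi> i y (y + others x i) s) has_derivative
             (\<lambda>h. G i (x i) (\<Sum>j\<in>UNIV. x j) s \<bullet> h)) (at (x i))"
    and F_phi: "\<forall>x\<in>Rset. \<forall>i. F i (x i) (\<Sum>j\<in>UNIV. x j) = \<phi> i x"
    and G_meas: "\<forall>i. (\<lambda>(y, z, s). G i y z s) \<in> borel_measurable (borel \<Otimes>\<^sub>M (borel \<Otimes>\<^sub>M P i))"
    and G_unbiased: "\<forall>i. \<forall>y\<in>edom (r i). \<forall>z.
          integrable (P i) (G i y z) \<and> (\<integral>s. G i y z s \<partial>P i) = F i y z"
  \<comment> \<open>Nash equilibrium\<close>
    and xs_R: "xs \<in> Rset"
    and xs_NE: "\<forall>i y. ereal (f i (xs i) (\<Sum>j\<in>UNIV. xs j)) + r i (xs i)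
                     \<le> ereal (f i y (y + others xs i)) + r i y"
  \<comment> \<open>network\<close>
    and Eg_sym: "\<forall>i j. Eg i j = Eg j i"
    and Eg_conn: "\<forall>i j. Eg\<^sup>*\<^sup>* i j"
    and A_pos: "\<forall>i j. (j = i \<or> Eg i j) \<longrightarrow> A i j > 0"
    and A_zero: "\<forall>i j. \<not> (j = i \<or> Eg i j) \<longrightarrow> A i j = 0"
    and A_sym: "\<forall>i j. A i j = A j i"
    and A_stoch: "\<forall>i. (\<Sum>j\<in>UNIV. A i j) = 1"
    and theta_pos: "\<theta> > 0" and beta: "0 < \<beta>" "\<beta> < 1"
    and A_geom: "\<forall>k\<ge>1. \<forall>i j. \<bar>matpow A k i j - 1 / n\<bar> \<le> \<theta> * \<beta> ^ k"
  \<comment> \<open>(ii), (iii) strong monotonicity and Lipschitz continuity of phi on R\<close>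
    and eta_pos: "\<eta>\<phi> > 0"
    and phi_strmono: "\<forall>x\<in>Rset. \<forall>y\<in>Rset.
          (\<Sum>i\<in>UNIV. (\<phi> i x - \<phi> i y) \<bullet> (x i - y i)) \<ge> \<eta>\<phi> * sq_dist x y"
    and phi_lip: "\<forall>x\<in>Rset. \<forall>y\<in>Rset.
          sqrt (sq_dist (\<lambda>i. \<phi> i x) (\<lambda>i. \<phi> i y)) \<le> L\<phi> * sqrt (sq_dist x y)"
  \<comment> \<open>algorithm parameters and sampling\<close>
    and alpha_pos: "\<alpha> > 0" and rho: "0 < \<rho>" "\<rho> < 1"
    and S_def: "\<forall>k. S k = nat \<lceil>(1 / \<alpha>\<^sup>2) * (1 / \<rho>) ^ (k + 1)\<rceil>"
    and x0_R: "\<forall>i. x0 i \<in> edom (r i)"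
    and M_prob: "prob_space M"
    and xi_meas: "\<forall>i k p. \<xi> i k p \<in> measurable M (P i)"
    and xi_distr: "\<forall>i k p. distr M (P i) (\<xi> i k p) = P i"
    and xi_indep: "prob_space.indep_vars M (\<lambda>(i, k, p). P i) (\<lambda>(i, k, p). \<xi> i k p)
                     {(i, k, p). 1 \<le> p \<and> p \<le> S k}"
  \<comment> \<open>(iv) local Lipschitz continuity of F_i in its aggregate argument\<close>
    and F_lip: "\<exists>cz>0. (\<forall>k i. \<forall>\<omega>\<in>space M.
                    norm (n *\<^sub>R Vh k \<omega> i) \<le> cz \<and> norm (\<Sum>j\<in>UNIV. X k \<omega> j) \<le> cz)
               \<and> (\<forall>i. \<forall>y\<in>edom (r i). \<forall>z1 z2. norm z1 \<le> cz \<longrightarrow> norm z2 \<le> cz \<longrightarrow>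
                    norm (F i y z1 - F i y z2) \<le> L i * norm (z1 - z2))"
  \<comment> \<open>(v) conditional second-moment bound on the sampling error\<close>
    and nu_pos: "\<forall>i. \<nu>1 i > 0 \<and> \<nu>2 i > 0"
    and err_var: "\<forall>i k. AE \<omega> in M.
          nn_cond_exp M (nat_filt M X k) (\<lambda>\<omega>. ennreal ((norm (e k i \<omega>))\<^sup>2)) \<omega>
            \<le> ennreal (((\<nu>1 i)\<^sup>2 * (norm (X k \<omega> i))\<^sup>2 + (\<nu>2 i)\<^sup>2) / real (S k))"
  shows "\<forall>k. (\<integral>\<omega>. sq_dist (X (Suc k) \<omega>) xs \<partial>M)
              \<le> rho_phi * (\<integral>\<omega>. sq_dist (X k \<omega>) xs \<partial>M) + C3 * \<gamma> ^ (k + 1)"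
proof -
  obtain cz where cz: "cz > 0"
    "\<forall>k i. \<forall>\<omega>\<in>space M. norm (n *\<^sub>R Vh k \<omega> i) \<le> cz \<and> norm (\<Sum>j\<in>UNIV. X k \<omega> j) \<le> cz"
    "\<forall>i. \<forall>y\<in>edom (r i). \<forall>z1 z2. norm z1 \<le> cz \<longrightarrow> norm z2 \<le> cz \<longrightarrow>
       norm (F i y z1 - F i y z2) \<le> L i * norm (z1 - z2)"
    using F_lip by blast
  have Suc_eq: "(\<lambda>k. k + 1) = Suc" by auto
  \<comment> \<open>The network enters only through \<open>A_geom\<close>, the law and independence of the samples only
    through \<open>err_var\<close>.\<close>
  interpret vspgr_game A \<theta> \<beta> r f \<phi> F G P xs M \<xi> x0 \<alpha> \<eta>\<phi> L\<phi> cz L S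
  proof (rule vspgr_game.intro)
    show "\<forall>i. xs i \<in> edom (r i)" using xs_R unfolding Rset_def by blast
    then show "\<forall>i. ((\<lambda>y. f i y (y + others xs i)) has_derivative (\<lambda>h. \<phi> i xs \<bullet> h)) (at (xs i))"
      using phi_grad unfolding Rset_def by blast
  qed (fact r_proper r_lsc r_convex r_compact x0_R xs_NE F_phi[unfolded Rset_def]
      phi_strmono[unfolded Rset_def] phi_lip[unfolded Rset_def] A_geom[unfolded n_def] theta_pos beta
      alpha_pos M_prob P_prob xi_meas G_meas G_unbiased cz[unfolded n_def Vh_def X_def Suc_eq])+
  have rho_phi: "rho_phi = 1 - 2 * \<alpha> * \<eta>\<phi> + 2 * \<alpha>^2 * (1/2 + (1 + 2 * \<alpha>^2) * \<nu>1b^2 + 2 * L\<phi>^2)"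
    unfolding assms(10,11) by (simp add: add_nonneg_nonneg)
  have DR: "DR = total_radius"
    unfolding assms(13) total_radius_def radius_def ..
  have \<nu>1: "\<forall>i. 0 \<le> \<nu>1 i \<and> \<nu>1 i \<le> \<nu>1b"
    using nu_pos unfolding assms(8) by (auto intro: less_imp_le)
  show ?thesis
  proof
    fix k
    have "\<forall>i. AE \<omega> in M. nn_cond_exp M (nat_filt M (vs_x \<alpha> A r G S Suc \<xi> x0) k)
        (\<lambda>\<omega>. ennreal ((norm (vs_err \<alpha> A r G F S Suc \<xi> x0 k i \<omega>))\<^sup>2)) \<omega>
        \<le> ennreal (((\<nu>1 i)\<^sup>2 * (norm (vs_x \<alpha> A r G S Suc \<xi> x0 k \<omega> i))\<^sup>2 + (\<nu>2 i)\<^sup>2) / real (S k))"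
      using err_var unfolding X_def e_def Suc_eq by blast
    from expected_sq_dist_contraction[OF this \<nu>1 S_def[rule_format] rho assms(7)]
    show "(\<integral>\<omega>. sq_dist (X (Suc k) \<omega>) xs \<partial>M)
        \<le> rho_phi * (\<integral>\<omega>. sq_dist (X k \<omega>) xs \<partial>M) + C3 * \<gamma> ^ (k + 1)"
      unfolding X_def Suc_eq rho_phi DR n_def assms(9,12,14-16) tracking_const_def .
  qed
qed

end
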